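(* Let $R$ be a commutative integral domain with identity, $\Gamma$ a discrete group with identity $e$, and $(\mathcal{G},c)\in\mathcal{C}_{R,\Gamma}$. Let $g\in\Gamma$ and $(m,n)\in N_R(\mathcal{G})_g$. Then: (1) $mn=1_{s(\operatorname{supp}(n))}$ and $nm=1_{s(\operatorname{supp}(m))}$; (2) $\operatorname{supp}(m)$ is a compact open bisection contained in $c^{-1}(g)$; (3) $\operatorname{supp}(n)=\operatorname{supp}(m)^{-1}$.
   Context: An ample Hausdorff groupoid is a Hausdorff topological groupoid whose range and source maps $r,s$ are local homeomorphisms and whose unit space $\mathcal{G}^0$ has a basis of compact open sets; a bisection is a subset on which $r$ and $s$ restrict to homeomorphisms onto open subsets of $\mathcal{G}^0$; $\mathcal{G}_x^x=\{\eta:s(\eta)=r(\eta)=x\}$. A continuous cocycle is a continuous groupoid homomorphism $c:\mathcal{G}\to\Gamma$. $A_R(\mathcal{G})$ is the Steinberg algebra: locally constant compactly supported functions $\mathcal{G}\to R$, pointwise addition, convolution $(f*g)(\eta)=\sum_{\alpha\beta=\eta}f(\alpha)g(\beta)$; $D_R(\mathcal{G})$ is the subalgebra of functions supported in $\mathcal{G}^0$; $\operatorname{supp}(f)=\{\eta:f(\eta)\ne0\}$; $1_U$ is the indicator function of $U$; $A_R(\mathcal{G})_g=\{f:\operatorname{supp}(f)\subseteq c^{-1}(g)\}$. $\mathcal{C}_{R,\Gamma}$ is the class of pairs $(\mathcal{G},c)$ with $\mathcal{G}$ an ample Hausdorff groupoid and $c:\mathcal{G}\to\Gamma$ a continuous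 cocycle such that there is a dense $X\subseteq\mathcal{G}^0$ with the group ring $R(c^{-1}(e)\cap\mathcal{G}_x^x)$ having no zero-divisors and only trivial units (every invertible element is of the form $uh$, $u\in R$, $h$ in the group) for all $x\in X$. A normaliser of $D_R(\mathcal{G})$ is a pair $(m,n)\in A_R(\mathcal{G})\times A_R(\mathcal{G})$ with $mD_R(\mathcal{G})n\cup nD_R(\mathcal{G})m\subseteq D_R(\mathcal{G})$, $mnm=m$ and $nmn=n$; $N_R(\mathcal{G})$ is the set of normalisers and $N_R(\mathcal{G})_g=N_R(\mathcal{G})\cap(A_R(\mathcal{G})_g\times A_R(\mathcal{G})_{g^{-1}})$. *)

theory Defs
  imports "HOL-Analysis.Analysis" "HOL-Algebra.Group"
begin

text \<open>The composition
  gcmp a b is the product a b, defined when gsrc a = grng b.\<close>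

record 'g top_groupoid =
  gtop :: "'g topology"
  gsrc :: "'g \<Rightarrow> 'g"
  grng :: "'g \<Rightarrow> 'g"
  gcmp :: "'g \<Rightarrow> 'g \<Rightarrow> 'g"
  ginv :: "'g \<Rightarrow> 'g"

definition arrows :: "'g top_groupoid \<Rightarrow> 'g set" where
  "arrows G = topspace (gtop G)"

definition units :: "'g top_groupoid \<Rightarrow> 'g set" where
  "units G = grng G ` arrows G"

definition composable :: "'g top_groupoid \<Rightarrow> ('g \<times> 'g) set" where
  "composable G = {(a, b). a \<in> arrows G \<and> b \<in> arrows G \<and> gsrc G a = grng G b}"

definition is_groupoid :: "'g top_groupoid \<Rightarrow> bool" where
  "is_groupoid G \<longleftrightarrow>
     (\<forall>a\<in>arrows G. gsrc G a \<in> arrows G \<and> grng G a \<in> arrows G \<and> ginv G a \<in> arrows G) \<and>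
     (\<forall>a\<in>arrows G. gsrc G (gsrc G a) = gsrc G a \<and> grng G (gsrc G a) = gsrc G a \<and>
                    gsrc G (grng G a) = grng G a \<and> grng G (grng G a) = grng G a) \<and>
     (\<forall>(a, b)\<in>composable G. gcmp G a b \<in> arrows G \<and>
                    gsrc G (gcmp G a b) = gsrc G b \<and> grng G (gcmp G a b) = grng G a) \<and>
     (\<forall>a\<in>arrows G. \<forall>b\<in>arrows G. \<forall>c\<in>arrows G.
        gsrc G a = grng G b \<longrightarrow> gsrc G b = grng G c \<longrightarrow>
        gcmp G (gcmp G a b) c = gcmp G a (gcmp G b c)) \<and>
     (\<forall>a\<in>arrows G. gcmp G (grng G a) a = a \<and> gcmp G a (gsrc G a) = a) \<and>
     (\<forall>a\<in>arrows G. gsrc G (ginv G a) = grng G a \<and> grng G (ginv G a) = gsrc G a \<and>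
                    gcmp G a (ginv G a) = grng G a \<and> gcmp G (ginv G a) a = gsrc G a)"

definition is_topological_groupoid :: "'g top_groupoid \<Rightarrow> bool" where
  "is_topological_groupoid G \<longleftrightarrow> is_groupoid G \<and>
     continuous_map (gtop G) (gtop G) (ginv G) \<and>
     continuous_map (subtopology (prod_topology (gtop G) (gtop G)) (composable G)) (gtop G)
       (\<lambda>(a, b). gcmp G a b)"

definition local_homeomorphism :: "'a topology \<Rightarrow> 'b topology \<Rightarrow> ('a \<Rightarrow> 'b) \<Rightarrow> bool" where
  "local_homeomorphism T S f \<longleftrightarrow> f ` topspace T \<subseteq> topspace S \<and>
     (\<forall>x\<in>topspace T. \<exists>U. openin T U \<and> x \<in> U \<and> openin S (f ` U) \<and>
        homeomorphic_map (subtopology T U) (subtopology S (f ` U)) f)"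

definition unit_top :: "'g top_groupoid \<Rightarrow> 'g topology" where
  "unit_top G = subtopology (gtop G) (units G)"

definition ample_hausdorff_groupoid :: "'g top_groupoid \<Rightarrow> bool" where
  "ample_hausdorff_groupoid G \<longleftrightarrow>
     is_topological_groupoid G \<and> Hausdorff_space (gtop G) \<and>
     local_homeomorphism (gtop G) (unit_top G) (grng G) \<and>
     local_homeomorphism (gtop G) (unit_top G) (gsrc G) \<and>
     (\<forall>U x. openin (unit_top G) U \<and> x \<in> U \<longrightarrow>
        (\<exists>K. openin (unit_top G) K \<and> compactin (unit_top G) K \<and> x \<in> K \<and> K \<subseteq> U))"

definition bisection :: "'g top_groupoid \<Rightarrow> 'g set \<Rightarrow> bool" where
  "bisection G B \<longleftrightarrow> B \<subseteq> arrows G \<and>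
     openin (unit_top G) (grng G ` B) \<and>
     homeomorphic_map (subtopology (gtop G) B) (subtopology (unit_top G) (grng G ` B)) (grng G) \<and>
     openin (unit_top G) (gsrc G ` B) \<and>
     homeomorphic_map (subtopology (gtop G) B) (subtopology (unit_top G) (gsrc G ` B)) (gsrc G)"

definition isotropy :: "'g top_groupoid \<Rightarrow> 'g \<Rightarrow> 'g set" where
  "isotropy G x = {\<eta> \<in> arrows G. gsrc G \<eta> = x \<and> grng G \<eta> = x}"

definition continuous_cocycle ::
  "'g top_groupoid \<Rightarrow> ('c, 'm) monoid_scheme \<Rightarrow> ('g \<Rightarrow> 'c) \<Rightarrow> bool" where
  "continuous_cocycle G \<Gamma> c \<longleftrightarrow>
     (\<forall>a\<in>arrows G. c a \<in> carrier \<Gamma>) \<and>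
     (\<forall>(a, b)\<in>composable G. c (gcmp G a b) = c a \<otimes>\<^bsub>\<Gamma>\<^esub> c b) \<and>
     (\<forall>\<gamma>\<in>carrier \<Gamma>. openin (gtop G) {\<eta> \<in> arrows G. c \<eta> = \<gamma>})"

definition supp :: "('g \<Rightarrow> 'a::zero) \<Rightarrow> 'g set" where
  "supp f = {\<eta>. f \<eta> \<noteq> 0}"

text \<open>Convolution (f*g)(eta) = sum over all factorisations alpha beta = eta of f(alpha) g(beta)
  (only the finitely many non-zero terms are summed).\<close>
definition conv :: "'g top_groupoid \<Rightarrow> ('g \<Rightarrow> 'a::comm_ring_1) \<Rightarrow> ('g \<Rightarrow> 'a) \<Rightarrow> 'g \<Rightarrow> 'a" where
  "conv G f h \<eta> = (\<Sum>(\<alpha>, \<beta>) \<in> {(\<alpha>, \<beta>) \<in> composable G. gcmp G \<alpha> \<beta> = \<eta> \<and> f \<alpha> * h \<beta> \<noteq> 0}.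
                      f \<alpha> * h \<beta>)"

definition steinberg :: "'g top_groupoid \<Rightarrow> ('g \<Rightarrow> 'a::comm_ring_1) set" where
  "steinberg G = {f. (\<forall>\<eta>. \<eta> \<notin> arrows G \<longrightarrow> f \<eta> = 0) \<and>
     (\<forall>\<eta>\<in>arrows G. \<exists>U. openin (gtop G) U \<and> \<eta> \<in> U \<and> (\<forall>\<xi>\<in>U. f \<xi> = f \<eta>)) \<and>
     compactin (gtop G) (gtop G closure_of supp f)}"

definition diag_sub :: "'g top_groupoid \<Rightarrow> ('g \<Rightarrow> 'a::comm_ring_1) set" where
  "diag_sub G = {f \<in> steinberg G. supp f \<subseteq> units G}"

definition graded_part ::
  "'g top_groupoid \<Rightarrow> ('g \<Rightarrow> 'c) \<Rightarrow> 'c \<Rightarrow> ('g \<Rightarrow> 'a::comm_ring_1) set" where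
  "graded_part G c g = {f \<in> steinberg G. supp f \<subseteq> {\<eta> \<in> arrows G. c \<eta> = g}}"

definition normalisers :: "'g top_groupoid \<Rightarrow> (('g \<Rightarrow> 'a::comm_ring_1) \<times> ('g \<Rightarrow> 'a)) set" where
  "normalisers G = {(m, n). m \<in> steinberg G \<and> n \<in> steinberg G \<and>
     (\<forall>d\<in>diag_sub G. conv G (conv G m d) n \<in> diag_sub G \<and> conv G (conv G n d) m \<in> diag_sub G) \<and>
     conv G (conv G m n) m = m \<and> conv G (conv G n m) n = n}"

definition graded_normalisers ::
  "'g top_groupoid \<Rightarrow> ('c, 'm) monoid_scheme \<Rightarrow> ('g \<Rightarrow> 'c) \<Rightarrow> 'c \<Rightarrow> (('g \<Rightarrow> 'a::comm_ring_1) \<times> ('g \<Rightarrow> 'a)) set" where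
  "graded_normalisers G \<Gamma> c g =
     normalisers G \<inter> (graded_part G c g \<times> graded_part G c (inv\<^bsub>\<Gamma>\<^esub> g))"

text \<open>The group ring R(H) of a subgroup H of an isotropy group: finitely supported
  R-valued functions with support in H, multiplied by convolution (which on H is the
  group-ring product).  Its identity is the indicator of the unit x.\<close>
definition group_ring :: "'g set \<Rightarrow> ('g \<Rightarrow> 'a::comm_ring_1) set" where
  "group_ring H = {f. finite (supp f) \<and> supp f \<subseteq> H}"

definition group_ring_no_zero_divisors ::
  "'a::comm_ring_1 itself \<Rightarrow> 'g top_groupoid \<Rightarrow> 'g set \<Rightarrow> bool" where
  "group_ring_no_zero_divisors _ G H \<longleftrightarrow>
     (\<forall>a\<in>(group_ring H :: ('g \<Rightarrow> 'a) set). \<forall>b\<in>group_ring H.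
        conv G a b = (\<lambda>_. 0) \<longrightarrow> a = (\<lambda>_. 0) \<or> b = (\<lambda>_. 0))"

definition group_ring_trivial_units ::
  "'a::comm_ring_1 itself \<Rightarrow> 'g top_groupoid \<Rightarrow> 'g \<Rightarrow> 'g set \<Rightarrow> bool" where
  "group_ring_trivial_units _ G x H \<longleftrightarrow>
     (\<forall>a\<in>(group_ring H :: ('g \<Rightarrow> 'a) set).
        (\<exists>b\<in>group_ring H. conv G a b = indicator {x} \<and> conv G b a = indicator {x}) \<longrightarrow>
        (\<exists>u::'a. \<exists>h\<in>H. a = (\<lambda>\<eta>. if \<eta> = h then u else 0)))"

definition class_C ::
  "'a::comm_ring_1 itself \<Rightarrow> ('c, 'm) monoid_scheme \<Rightarrow> 'g top_groupoid \<Rightarrow> ('g \<Rightarrow> 'c) \<Rightarrow> bool" where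
  "class_C R \<Gamma> G c \<longleftrightarrow> ample_hausdorff_groupoid G \<and> continuous_cocycle G \<Gamma> c \<and>
     (\<exists>X \<subseteq> units G. unit_top G closure_of X = units G \<and>
        (\<forall>x\<in>X. group_ring_no_zero_divisors R G {\<eta> \<in> isotropy G x. c \<eta> = \<one>\<^bsub>\<Gamma>\<^esub>} \<and>
                 group_ring_trivial_units R G x {\<eta> \<in> isotropy G x. c \<eta> = \<one>\<^bsub>\<Gamma>\<^esub>}))"

end

theory Submission
  imports Defs
begin

(* A normaliser (m, n) of the diagonal turns every compact open set V of units into a diagonal
   element m 1\<^sub>V n, which vanishes off the unit space; together with m n m = m this forces
   (m 1\<^sub>V n)(r \<alpha>) = 1 whenever \<alpha> \<in> supp m and s \<alpha> \<in> V.  At a unit x, translating m and n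
   by an arrow \<alpha> of supp m with source x gives two elements of the group ring of the degree-zero
   isotropy group at x that are inverse to each other.  Where that group ring has only trivial
   units they are monomials, so \<alpha> is the only arrow of supp m with source x and
   m \<alpha> * n \<alpha>\<inverse> = 1.  Such units are dense and m, n are locally constant, so s is injective on
   supp m and m \<alpha> * n \<alpha>\<inverse> = 1 on all of supp m.  Applied also to (n, m), this gives
   supp n = (supp m)\<inverse>, the bisection property, and the formulas for m n and n m. *)

lemma local_homeomorphism_imp_continuous_map:
  assumes "local_homeomorphism T S f"
  shows "continuous_map T S f"
proof (rule pasting_lemma[where I = "{W. openin T W \<and> continuous_map (subtopology T W) S f}"
      and T = id and f = "\<lambda>_. f"])
  fix x assume "x \<in> topspace T"
  then obtain W where "openin T W" "x \<in> W"
      "homeomorphic_map (subtopology T W) (subtopology S (f ` W)) f"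
    using assms unfolding local_homeomorphism_def by blast
  then show "\<exists>W. W \<in> {W. openin T W \<and> continuous_map (subtopology T W) S f} \<and> x \<in> id W \<and> f x = f x"
    by (metis (mono_tags, lifting) continuous_map_into_fulltopology homeomorphic_imp_continuous_map
        id_apply mem_Collect_eq)
qed auto

lemma local_homeomorphism_openin_image:
  assumes lh: "local_homeomorphism T S f" and U: "openin T U"
  shows "openin S (f ` U)"
proof (subst openin_subopen, intro ballI)
  fix y assume "y \<in> f ` U"
  then obtain x where x: "x \<in> U" "y = f x" by auto
  then have "x \<in> topspace T" using U openin_subset by blast
  then obtain W where W: "openin T W" "x \<in> W" "openin S (f ` W)"
      "homeomorphic_map (subtopology T W) (subtopology S (f ` W)) f"
    using lh unfolding local_homeomorphism_def by blast
  have "openin (subtopology T W) (U \<inter> W)"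
    using U by (simp add: openin_subtopology_Int)
  then have "openin (subtopology S (f ` W)) (f ` (U \<inter> W))"
    using W(4) homeomorphic_imp_open_map open_map_def by blast
  then have "openin S (f ` (U \<inter> W))"
    using W(3) openin_trans_full by blast
  then show "\<exists>V. openin S V \<and> y \<in> V \<and> V \<subseteq> f ` U"
    using x W(2) by blast
qed

lemma local_homeomorphism_locally_injective:
  assumes lh: "local_homeomorphism T S f" and "x \<in> topspace T"
  obtains W where "openin T W" "x \<in> W" "inj_on f W"
proof -
  obtain W where "openin T W" "x \<in> W"
      "homeomorphic_map (subtopology T W) (subtopology S (f ` W)) f"
    using assms unfolding local_homeomorphism_def by blast
  then show thesis
    using that homeomorphic_imp_injective_map openin_subset topspace_subtopology_subset by metis
qed

lemma local_homeomorphism_finite_fibre: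
  assumes lh: "local_homeomorphism T S f" and K: "compactin T K"
  shows "finite {x \<in> K. f x = y}"
proof -
  let ?\<U> = "{W. openin T W \<and> inj_on f W}"
  have "K \<subseteq> \<Union>?\<U>"
  proof
    fix x assume "x \<in> K"
    then have "x \<in> topspace T"
      using K compactin_subset_topspace by blast
    then obtain W where "openin T W" "x \<in> W" "inj_on f W"
      using local_homeomorphism_locally_injective[OF lh] by blast
    then show "x \<in> \<Union>?\<U>" by blast
  qed
  then obtain \<F> where \<F>: "finite \<F>" "\<F> \<subseteq> ?\<U>" "K \<subseteq> \<Union>\<F>"
    using K unfolding compactin_def by (metis (no_types, lifting) mem_Collect_eq)
  have "finite {x \<in> W. f x = y}" if "W \<in> \<F>" for W
  proof (rule finite_subset)
    show "{x \<in> W. f x = y} \<subseteq> the_inv_into W f ` {y}"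
      using \<F>(2) that by (auto simp: the_inv_into_f_f)
  qed simp
  moreover have "{x \<in> K. f x = y} \<subseteq> (\<Union>W\<in>\<F>. {x \<in> W. f x = y})"
    using \<F>(3) by auto
  ultimately show ?thesis
    using \<F>(1) by (meson finite_UN_I finite_subset)
qed

lemma local_homeomorphism_restrict_homeomorphic_map:
  assumes lh: "local_homeomorphism T S f" and B: "openin T B" "inj_on f B"
  shows "openin S (f ` B)" "homeomorphic_map (subtopology T B) (subtopology S (f ` B)) f"
proof -
  show fB: "openin S (f ` B)"
    using local_homeomorphism_openin_image[OF lh B(1)] .
  have BT: "B \<subseteq> topspace T" and fBS: "f ` B \<subseteq> topspace S"
    using B(1) fB openin_subset by blast+
  show "homeomorphic_map (subtopology T B) (subtopology S (f ` B)) f"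
  proof (rule bijective_open_imp_homeomorphic_map)
    show "continuous_map (subtopology T B) (subtopology S (f ` B)) f"
      using local_homeomorphism_imp_continuous_map[OF lh]
      by (simp add: continuous_map_from_subtopology continuous_map_in_subtopology)
    show "open_map (subtopology T B) (subtopology S (f ` B)) f"
      unfolding open_map_def
    proof (intro allI impI)
      fix U assume "openin (subtopology T B) U"
      then have "openin T U" "U \<subseteq> B"
        using B(1) openin_trans_full openin_imp_subset by (blast, metis)
      then have "openin S (f ` U)" "f ` U = f ` U \<inter> f ` B"
        using local_homeomorphism_openin_image[OF lh] by blast+
      then show "openin (subtopology S (f ` B)) (f ` U)"
        unfolding openin_subtopology by blast
    qed
  qed (use BT fBS B(2) in \<open>auto simp: Int_absorb1\<close>)
qed

lemma sum_sum_collapse_to_column: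
  fixes T :: "'i \<Rightarrow> 'i \<Rightarrow> 'a::comm_semiring_1"
  assumes "finite J" "i\<^sub>0 \<in> J"
    and rows: "\<And>i. i \<in> I \<Longrightarrow> i \<noteq> i\<^sub>0 \<Longrightarrow> (\<Sum>j\<in>J. T i j) = 0"
    and columns: "\<And>j. j \<in> J \<Longrightarrow> j \<noteq> i\<^sub>0 \<Longrightarrow> (\<Sum>i\<in>I. w i * T i j) = 0"
    and "w i\<^sub>0 = 1"
  shows "(\<Sum>i\<in>I. \<Sum>j\<in>J. T i j) = (\<Sum>i\<in>I. w i * T i i\<^sub>0)"
proof -
  have "(\<Sum>i\<in>I. \<Sum>j\<in>J. T i j) = (\<Sum>i\<in>I. w i * (\<Sum>j\<in>J. T i j))"
  proof (rule sum.cong[OF refl])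
    fix i assume "i \<in> I"
    then show "(\<Sum>j\<in>J. T i j) = w i * (\<Sum>j\<in>J. T i j)"
      using rows \<open>w i\<^sub>0 = 1\<close> by (cases "i = i\<^sub>0") simp_all
  qed
  also have "\<dots> = (\<Sum>j\<in>J. \<Sum>i\<in>I. w i * T i j)"
    unfolding sum_distrib_left by (rule sum.swap)
  also have "\<dots> = (\<Sum>i\<in>I. w i * T i i\<^sub>0)"
    using columns assms(1,2) by (simp add: sum.remove)
  finally show ?thesis .
qed

locale ample_groupoid =
  fixes G :: "'g top_groupoid"
  assumes ample_hausdorff: "ample_hausdorff_groupoid G"
begin

abbreviation src where "src \<equiv> gsrc G"
abbreviation rng where "rng \<equiv> grng G"
abbreviation comp (infixl "\<cdot>" 70) where "a \<cdot> b \<equiv> gcmp G a b"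
abbreviation inverse_arrow ("_\<^sup>-\<^sup>1" [1000] 999) where "a\<^sup>-\<^sup>1 \<equiv> ginv G a"

lemma groupoid: "is_groupoid G"
  using ample_hausdorff unfolding ample_hausdorff_groupoid_def is_topological_groupoid_def by blast

lemma Hausdorff: "Hausdorff_space (gtop G)"
  using ample_hausdorff unfolding ample_hausdorff_groupoid_def by blast

lemma local_homeomorphism_rng: "local_homeomorphism (gtop G) (unit_top G) rng"
  and local_homeomorphism_src: "local_homeomorphism (gtop G) (unit_top G) src"
  using ample_hausdorff unfolding ample_hausdorff_groupoid_def by blast+

lemma continuous_map_inverse: "continuous_map (gtop G) (gtop G) (ginv G)"
  using ample_hausdorff unfolding ample_hausdorff_groupoid_def is_topological_groupoid_def by blast

lemma compact_open_unit_nbhd: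
  "openin (unit_top G) U \<Longrightarrow> x \<in> U \<Longrightarrow>
    \<exists>K. openin (unit_top G) K \<and> compactin (unit_top G) K \<and> x \<in> K \<and> K \<subseteq> U"
  using ample_hausdorff unfolding ample_hausdorff_groupoid_def by blast

lemma src_in_arrows [simp]: "a \<in> arrows G \<Longrightarrow> src a \<in> arrows G"
  and rng_in_arrows [simp]: "a \<in> arrows G \<Longrightarrow> rng a \<in> arrows G"
  and inverse_in_arrows [simp]: "a \<in> arrows G \<Longrightarrow> a\<^sup>-\<^sup>1 \<in> arrows G"
  using groupoid unfolding is_groupoid_def by blast+

lemma rng_src [simp]: "a \<in> arrows G \<Longrightarrow> rng (src a) = src a"
  and src_rng [simp]: "a \<in> arrows G \<Longrightarrow> src (rng a) = rng a"
  and rng_rng [simp]: "a \<in> arrows G \<Longrightarrow> rng (rng a) = rng a"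
  using groupoid unfolding is_groupoid_def by blast+

lemma comp_in_arrows [simp]: "a \<in> arrows G \<Longrightarrow> b \<in> arrows G \<Longrightarrow> src a = rng b \<Longrightarrow> a \<cdot> b \<in> arrows G"
  and src_comp [simp]: "a \<in> arrows G \<Longrightarrow> b \<in> arrows G \<Longrightarrow> src a = rng b \<Longrightarrow> src (a \<cdot> b) = src b"
  and rng_comp [simp]: "a \<in> arrows G \<Longrightarrow> b \<in> arrows G \<Longrightarrow> src a = rng b \<Longrightarrow> rng (a \<cdot> b) = rng a"
  using groupoid unfolding is_groupoid_def composable_def by auto

lemma comp_assoc:
  "a \<in> arrows G \<Longrightarrow> b \<in> arrows G \<Longrightarrow> e \<in> arrows G \<Longrightarrow> src a = rng b \<Longrightarrow> src b = rng e \<Longrightarrow>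
    (a \<cdot> b) \<cdot> e = a \<cdot> (b \<cdot> e)"
  using groupoid unfolding is_groupoid_def by blast

lemma rng_comp_id [simp]: "a \<in> arrows G \<Longrightarrow> rng a \<cdot> a = a"
  and comp_src_id [simp]: "a \<in> arrows G \<Longrightarrow> a \<cdot> src a = a"
  using groupoid unfolding is_groupoid_def by blast+

lemma src_inverse [simp]: "a \<in> arrows G \<Longrightarrow> src (a\<^sup>-\<^sup>1) = rng a"
  and rng_inverse [simp]: "a \<in> arrows G \<Longrightarrow> rng (a\<^sup>-\<^sup>1) = src a"
  and comp_inverse_right [simp]: "a \<in> arrows G \<Longrightarrow> a \<cdot> a\<^sup>-\<^sup>1 = rng a"
  and comp_inverse_left [simp]: "a \<in> arrows G \<Longrightarrow> a\<^sup>-\<^sup>1 \<cdot> a = src a"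
  using groupoid unfolding is_groupoid_def by blast+

lemma inverse_comp_cancel: "a \<in> arrows G \<Longrightarrow> b \<in> arrows G \<Longrightarrow> src a = rng b \<Longrightarrow> a\<^sup>-\<^sup>1 \<cdot> (a \<cdot> b) = b"
  using comp_assoc[of "a\<^sup>-\<^sup>1" a b] by simp

lemma comp_inverse_cancel: "a \<in> arrows G \<Longrightarrow> b \<in> arrows G \<Longrightarrow> rng a = rng b \<Longrightarrow> a \<cdot> (a\<^sup>-\<^sup>1 \<cdot> b) = b"
  using comp_assoc[of a "a\<^sup>-\<^sup>1" b] by simp

lemma comp_comp_inverse_cancel: "a \<in> arrows G \<Longrightarrow> b \<in> arrows G \<Longrightarrow> src a = rng b \<Longrightarrow> (a \<cdot> b) \<cdot> b\<^sup>-\<^sup>1 = a"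
  using comp_assoc[of a b "b\<^sup>-\<^sup>1"] comp_src_id[of a] by simp

lemma comp_inverse_comp_cancel: "a \<in> arrows G \<Longrightarrow> b \<in> arrows G \<Longrightarrow> src a = src b \<Longrightarrow> (a \<cdot> b\<^sup>-\<^sup>1) \<cdot> b = a"
  using comp_assoc[of a "b\<^sup>-\<^sup>1" b] comp_src_id[of a] by simp

lemma inverse_inverse [simp]: "a \<in> arrows G \<Longrightarrow> (a\<^sup>-\<^sup>1)\<^sup>-\<^sup>1 = a"
  using comp_comp_inverse_cancel[of a "a\<^sup>-\<^sup>1"] rng_comp_id[of "(a\<^sup>-\<^sup>1)\<^sup>-\<^sup>1"] by simp

lemma inverse_comp_distrib:
  assumes "a \<in> arrows G" "b \<in> arrows G" "src a = rng b"
  shows "(a \<cdot> b)\<^sup>-\<^sup>1 = b\<^sup>-\<^sup>1 \<cdot> a\<^sup>-\<^sup>1"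
proof -
  have "(a \<cdot> b) \<cdot> (b\<^sup>-\<^sup>1 \<cdot> a\<^sup>-\<^sup>1) = rng (a \<cdot> b)"
    using assms comp_assoc[of a b "b\<^sup>-\<^sup>1 \<cdot> a\<^sup>-\<^sup>1"] comp_inverse_cancel[of b "a\<^sup>-\<^sup>1"] by simp
  then have "(a \<cdot> b)\<^sup>-\<^sup>1 \<cdot> rng (a \<cdot> b) = b\<^sup>-\<^sup>1 \<cdot> a\<^sup>-\<^sup>1"
    using assms inverse_comp_cancel[of "a \<cdot> b" "b\<^sup>-\<^sup>1 \<cdot> a\<^sup>-\<^sup>1"] by simp
  then show ?thesis
    using assms comp_src_id[of "(a \<cdot> b)\<^sup>-\<^sup>1"] by simp
qed

lemma inj_on_inverse_comp_left: "a \<in> arrows G \<Longrightarrow> inj_on (\<lambda>b. a\<^sup>-\<^sup>1 \<cdot> b) {b \<in> arrows G. rng b = rng a}"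
  by (rule inj_onI) (metis (mono_tags, lifting) comp_inverse_cancel mem_Collect_eq)

lemma inj_on_comp_right: "a \<in> arrows G \<Longrightarrow> inj_on (\<lambda>b. b \<cdot> a) {b \<in> arrows G. src b = rng a}"
  by (rule inj_onI) (metis (mono_tags, lifting) comp_comp_inverse_cancel mem_Collect_eq)

lemma units_iff: "u \<in> units G \<longleftrightarrow> u \<in> arrows G \<and> rng u = u"
  unfolding units_def by (auto intro: rev_image_eqI)

lemma units_subset_arrows: "units G \<subseteq> arrows G"
  using units_iff by blast

lemma rng_unit [simp]: "u \<in> units G \<Longrightarrow> rng u = u"
  and src_unit [simp]: "u \<in> units G \<Longrightarrow> src u = u"
  by (metis units_iff, metis units_iff src_rng)

lemma inverse_unit [simp]: "u \<in> units G \<Longrightarrow> u\<^sup>-\<^sup>1 = u"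
  using comp_src_id[of "u\<^sup>-\<^sup>1"] comp_inverse_left[of u] units_iff[of u] by simp

lemma src_in_units [simp]: "a \<in> arrows G \<Longrightarrow> src a \<in> units G"
  and rng_in_units [simp]: "a \<in> arrows G \<Longrightarrow> rng a \<in> units G"
  by (simp_all add: units_iff)

lemma inverse_comp_in_units_iff:
  assumes "a \<in> arrows G" "b \<in> arrows G" "rng a = rng b"
  shows "a\<^sup>-\<^sup>1 \<cdot> b \<in> units G \<longleftrightarrow> a = b"
proof
  assume "a\<^sup>-\<^sup>1 \<cdot> b \<in> units G"
  then have "a\<^sup>-\<^sup>1 \<cdot> b = src a"
    using assms by (metis rng_comp rng_unit inverse_in_arrows rng_inverse src_inverse)
  then show "a = b"
    using comp_inverse_cancel[OF assms] assms(1) by simp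
qed (use assms in simp)

lemma comp_inverse_in_units_iff:
  assumes "a \<in> arrows G" "b \<in> arrows G" "src a = src b"
  shows "a \<cdot> b\<^sup>-\<^sup>1 \<in> units G \<longleftrightarrow> a = b"
proof
  assume "a \<cdot> b\<^sup>-\<^sup>1 \<in> units G"
  then have "a \<cdot> b\<^sup>-\<^sup>1 = rng b"
    using assms by (metis src_comp src_unit inverse_in_arrows rng_inverse src_inverse)
  then show "a = b"
    using comp_inverse_comp_cancel[OF assms] assms(2) by simp
qed (use assms in simp)

lemma conjugate_in_units_iff:
  assumes "a \<in> arrows G" "k \<in> arrows G" "src k = src a" "rng k = src a"
  shows "a \<cdot> (k \<cdot> a\<^sup>-\<^sup>1) \<in> units G \<longleftrightarrow> k = src a"
proof -
  have "a \<cdot> (k \<cdot> a\<^sup>-\<^sup>1) = (a \<cdot> k) \<cdot> a\<^sup>-\<^sup>1"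
    using assms by (simp add: comp_assoc)
  moreover have "a \<cdot> k = a \<longleftrightarrow> k = src a"
    using assms inverse_comp_cancel[of a k] by auto
  ultimately show ?thesis
    using assms comp_inverse_in_units_iff[of "a \<cdot> k" a] by simp
qed

lemma topspace_unit_top: "topspace (unit_top G) = units G"
  unfolding unit_top_def using units_subset_arrows by (auto simp: arrows_def)

lemma openin_unit_top_subset: "openin (unit_top G) V \<Longrightarrow> V \<subseteq> units G"
  using openin_subset topspace_unit_top by blast

lemma openin_units: "openin (gtop G) (units G)"
proof (subst openin_subopen, intro ballI)
  fix x assume x: "x \<in> units G"
  then have "x \<in> topspace (gtop G)"
    using units_subset_arrows by (auto simp: arrows_def)
  then obtain W where W: "openin (gtop G) W" "x \<in> W" "inj_on rng W"
    using local_homeomorphism_locally_injective[OF local_homeomorphism_rng] by blast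
  have "continuous_map (gtop G) (gtop G) rng"
    using local_homeomorphism_imp_continuous_map[OF local_homeomorphism_rng]
    unfolding unit_top_def using continuous_map_into_fulltopology by blast
  then have "openin (gtop G) ({y \<in> topspace (gtop G). rng y \<in> W} \<inter> W)"
    using W(1) openin_continuous_map_preimage by blast
  moreover have "{y \<in> topspace (gtop G). rng y \<in> W} \<inter> W \<subseteq> units G"
  proof
    fix y assume y: "y \<in> {y \<in> topspace (gtop G). rng y \<in> W} \<inter> W"
    then have "y \<in> arrows G" by (simp add: arrows_def)
    moreover have "rng y = y"
      using inj_onD[OF W(3), of "rng y" y] y \<open>y \<in> arrows G\<close> by simp
    ultimately show "y \<in> units G" by (simp add: units_iff)
  qed
  moreover have "x \<in> {y \<in> topspace (gtop G). rng y \<in> W} \<inter> W"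
    using W(2) x \<open>x \<in> topspace (gtop G)\<close> by simp
  ultimately show "\<exists>T. openin (gtop G) T \<and> x \<in> T \<and> T \<subseteq> units G" by blast
qed

lemma openin_unit_top_imp_openin: "openin (unit_top G) V \<Longrightarrow> openin (gtop G) V"
  unfolding unit_top_def using openin_units openin_trans_full by blast

lemma compactin_unit_top_imp_compactin: "compactin (unit_top G) V \<Longrightarrow> compactin (gtop G) V"
  unfolding unit_top_def by (simp add: compactin_subtopology)

lemma compact_open_unit_nbhd_avoiding:
  assumes "z \<in> units G" "finite E" "z \<notin> E"
  obtains V where "openin (unit_top G) V" "compactin (unit_top G) V" "z \<in> V" "V \<inter> E = {}"
proof -
  have "Hausdorff_space (unit_top G)"
    unfolding unit_top_def using Hausdorff Hausdorff_space_subtopology by blast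
  then have "closedin (unit_top G) (E \<inter> units G)"
    using assms(2) Hausdorff_imp_t1_space t1_space_closedin_finite topspace_unit_top
    by (metis finite_Int inf_le2)
  then have "openin (unit_top G) (topspace (unit_top G) - E \<inter> units G)"
    by (rule openin_diff[OF openin_topspace])
  moreover have "topspace (unit_top G) - E \<inter> units G = units G - E"
    using topspace_unit_top by blast
  ultimately have "openin (unit_top G) (units G - E)"
    by simp
  then show thesis
    using compact_open_unit_nbhd[of "units G - E" z] assms that by blast
qed

lemma compact_open_units_cover:
  assumes "finite E" "E \<subseteq> units G"
  obtains V where "openin (unit_top G) V" "compactin (unit_top G) V" "E \<subseteq> V"
proof -
  have "\<forall>z\<in>E. \<exists>V. openin (unit_top G) V \<and> compactin (unit_top G) V \<and> z \<in> V"
    using compact_open_unit_nbhd_avoiding[of _ "{}"] assms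
    by (metis finite.emptyI empty_iff subsetD)
  then obtain K where
    K: "\<And>z. z \<in> E \<Longrightarrow> openin (unit_top G) (K z) \<and> compactin (unit_top G) (K z) \<and> z \<in> K z"
    by metis
  show thesis
    using K assms by (intro that[of "\<Union>(K ` E)"]) (auto intro!: compactin_Union)
qed

lemma steinberg_vanishes: "f \<in> steinberg G \<Longrightarrow> \<eta> \<notin> arrows G \<Longrightarrow> f \<eta> = 0"
  unfolding steinberg_def by blast

lemma supp_steinberg_subset: "f \<in> steinberg G \<Longrightarrow> supp f \<subseteq> arrows G"
  using steinberg_vanishes by (fastforce simp: supp_def)

lemma openin_steinberg_preimage:
  assumes "f \<in> steinberg G"
  shows "openin (gtop G) {\<eta> \<in> arrows G. P (f \<eta>)}"
proof (subst openin_subopen, intro ballI)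
  fix \<eta> assume \<eta>: "\<eta> \<in> {\<eta> \<in> arrows G. P (f \<eta>)}"
  then obtain U where U: "openin (gtop G) U" "\<eta> \<in> U" "\<forall>\<xi>\<in>U. f \<xi> = f \<eta>"
    using assms unfolding steinberg_def by blast
  then have "U \<subseteq> {\<eta> \<in> arrows G. P (f \<eta>)}"
    using \<eta> openin_subset by (fastforce simp: arrows_def)
  then show "\<exists>T. openin (gtop G) T \<and> \<eta> \<in> T \<and> T \<subseteq> {\<eta> \<in> arrows G. P (f \<eta>)}"
    using U by blast
qed

lemma openin_supp_steinberg: "f \<in> steinberg G \<Longrightarrow> openin (gtop G) (supp f)"
proof -
  assume f: "f \<in> steinberg G"
  then have "supp f = {\<eta> \<in> arrows G. f \<eta> \<noteq> 0}"
    using supp_steinberg_subset by (auto simp: supp_def)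
  then show ?thesis
    using openin_steinberg_preimage[OF f, of "\<lambda>t. t \<noteq> 0"] by simp
qed

lemma compactin_supp_steinberg:
  assumes "f \<in> steinberg G"
  shows "compactin (gtop G) (supp f)"
proof -
  have "topspace (gtop G) - supp f = {\<eta> \<in> arrows G. f \<eta> = 0}"
    by (auto simp: arrows_def supp_def)
  then have "closedin (gtop G) (supp f)"
    using openin_steinberg_preimage[OF assms, of "\<lambda>t. t = 0"] supp_steinberg_subset[OF assms]
    by (simp add: closedin_def arrows_def)
  moreover have "compactin (gtop G) (gtop G closure_of supp f)"
    using assms unfolding steinberg_def by blast
  ultimately show ?thesis
    by (simp add: closure_of_closedin)
qed

lemma finite_rng_fibre_supp: "f \<in> steinberg G \<Longrightarrow> finite {\<alpha> \<in> supp f. rng \<alpha> = w}"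
  and finite_src_fibre_supp: "f \<in> steinberg G \<Longrightarrow> finite {\<alpha> \<in> supp f. src \<alpha> = w}"
  using local_homeomorphism_finite_fibre[OF local_homeomorphism_rng compactin_supp_steinberg]
    local_homeomorphism_finite_fibre[OF local_homeomorphism_src compactin_supp_steinberg] by blast+

lemma bisectionI:
  assumes "openin (gtop G) B" "inj_on rng B" "inj_on src B"
  shows "bisection G B"
  unfolding bisection_def
  using local_homeomorphism_restrict_homeomorphic_map[OF local_homeomorphism_rng assms(1,2)]
    local_homeomorphism_restrict_homeomorphic_map[OF local_homeomorphism_src assms(1,3)]
    openin_subset[OF assms(1)] by (simp add: arrows_def)

lemma indicator_in_diag_sub:
  assumes "openin (unit_top G) V" "compactin (unit_top G) V"
  shows "indicator V \<in> diag_sub G"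
proof -
  have V: "V \<subseteq> units G" "openin (gtop G) V" "closedin (gtop G) V"
    using assms openin_unit_top_subset openin_unit_top_imp_openin
      compactin_imp_closedin[OF Hausdorff compactin_unit_top_imp_compactin] by blast+
  have supp: "supp (indicator V) = V"
    by (auto simp: supp_def indicator_def)
  have "indicator V \<in> steinberg G"
    unfolding steinberg_def
  proof (intro CollectI conjI allI impI ballI)
    fix \<eta> assume "\<eta> \<in> arrows G"
    show "\<exists>U. openin (gtop G) U \<and> \<eta> \<in> U \<and> (\<forall>\<xi>\<in>U. indicator V \<xi> = indicator V \<eta>)"
    proof (cases "\<eta> \<in> V")
      case True
      then show ?thesis using V(2) by (intro exI[of _ V]) auto
    next
      case False
      then show ?thesis
        using V(3) \<open>\<eta> \<in> arrows G\<close>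
        by (intro exI[of _ "topspace (gtop G) - V"]) (auto simp: arrows_def)
    qed
  next
    show "compactin (gtop G) (gtop G closure_of supp (indicator V))"
      using V(3) assms(2) compactin_unit_top_imp_compactin by (simp add: supp closure_of_closedin)
  qed (use V(1) units_subset_arrows in \<open>auto simp: indicator_def\<close>)
  then show ?thesis
    unfolding diag_sub_def using supp V(1) by auto
qed

lemma diag_sub_vanishes: "d \<in> diag_sub G \<Longrightarrow> \<eta> \<notin> units G \<Longrightarrow> d \<eta> = 0"
  unfolding diag_sub_def supp_def by blast

lemma conv_outside_arrows: "\<eta> \<notin> arrows G \<Longrightarrow> conv G f h \<eta> = 0"
  unfolding conv_def composable_def by (auto intro!: sum.neutral)

lemma conv_eq_sum_rng_fibre:
  assumes \<eta>: "\<eta> \<in> arrows G" and S: "finite S" "{\<alpha> \<in> supp f. rng \<alpha> = rng \<eta>} \<subseteq> S"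
    "S \<subseteq> {\<alpha> \<in> arrows G. rng \<alpha> = rng \<eta>}"
  shows "conv G f h \<eta> = (\<Sum>\<alpha>\<in>S. f \<alpha> * h (\<alpha>\<^sup>-\<^sup>1 \<cdot> \<eta>))"
proof -
  let ?P = "{(\<alpha>, \<beta>) \<in> composable G. \<alpha> \<cdot> \<beta> = \<eta> \<and> f \<alpha> * h \<beta> \<noteq> 0}"
  let ?S = "{\<alpha> \<in> S. f \<alpha> * h (\<alpha>\<^sup>-\<^sup>1 \<cdot> \<eta>) \<noteq> 0}"
  have "bij_betw (\<lambda>\<alpha>. (\<alpha>, \<alpha>\<^sup>-\<^sup>1 \<cdot> \<eta>)) ?S ?P"
  proof (rule bij_betwI')
    fix \<alpha> assume "\<alpha> \<in> ?S"
    then show "(\<alpha>, \<alpha>\<^sup>-\<^sup>1 \<cdot> \<eta>) \<in> ?P"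
      using S(3) \<eta> comp_inverse_cancel by (auto simp: composable_def)
  next
    fix p assume "p \<in> ?P"
    then obtain \<alpha> \<beta> where p: "p = (\<alpha>, \<beta>)" "\<alpha> \<in> arrows G" "\<beta> \<in> arrows G" "src \<alpha> = rng \<beta>"
        "\<alpha> \<cdot> \<beta> = \<eta>" "f \<alpha> * h \<beta> \<noteq> 0"
      unfolding composable_def by auto
    then have "\<alpha> \<in> S"
      using S(2) by (auto simp: supp_def)
    moreover have "\<alpha>\<^sup>-\<^sup>1 \<cdot> \<eta> = \<beta>"
      using p inverse_comp_cancel by blast
    ultimately show "\<exists>\<alpha>\<in>?S. p = (\<alpha>, \<alpha>\<^sup>-\<^sup>1 \<cdot> \<eta>)"
      using p by auto
  qed auto
  then have "conv G f h \<eta> = (\<Sum>\<alpha>\<in>?S. f \<alpha> * h (\<alpha>\<^sup>-\<^sup>1 \<cdot> \<eta>))"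
    unfolding conv_def by (simp add: sum.reindex_bij_betw[symmetric])
  also have "\<dots> = (\<Sum>\<alpha>\<in>S. f \<alpha> * h (\<alpha>\<^sup>-\<^sup>1 \<cdot> \<eta>))"
    using S(1) by (intro sum.mono_neutral_left) auto
  finally show ?thesis .
qed

lemma conv_eq_sum_src_fibre:
  assumes \<eta>: "\<eta> \<in> arrows G" and S: "finite S" "{\<beta> \<in> supp h. src \<beta> = src \<eta>} \<subseteq> S"
    "S \<subseteq> {\<beta> \<in> arrows G. src \<beta> = src \<eta>}"
  shows "conv G f h \<eta> = (\<Sum>\<beta>\<in>S. f (\<eta> \<cdot> \<beta>\<^sup>-\<^sup>1) * h \<beta>)"
proof -
  let ?P = "{(\<alpha>, \<beta>) \<in> composable G. \<alpha> \<cdot> \<beta> = \<eta> \<and> f \<alpha> * h \<beta> \<noteq> 0}"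
  let ?S = "{\<beta> \<in> S. f (\<eta> \<cdot> \<beta>\<^sup>-\<^sup>1) * h \<beta> \<noteq> 0}"
  have "bij_betw (\<lambda>\<beta>. (\<eta> \<cdot> \<beta>\<^sup>-\<^sup>1, \<beta>)) ?S ?P"
  proof (rule bij_betwI')
    fix \<beta> assume "\<beta> \<in> ?S"
    then show "(\<eta> \<cdot> \<beta>\<^sup>-\<^sup>1, \<beta>) \<in> ?P"
      using S(3) \<eta> comp_inverse_comp_cancel by (auto simp: composable_def)
  next
    fix p assume "p \<in> ?P"
    then obtain \<alpha> \<beta> where p: "p = (\<alpha>, \<beta>)" "\<alpha> \<in> arrows G" "\<beta> \<in> arrows G" "src \<alpha> = rng \<beta>"
        "\<alpha> \<cdot> \<beta> = \<eta>" "f \<alpha> * h \<beta> \<noteq> 0"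
      unfolding composable_def by auto
    then have "\<beta> \<in> S"
      using S(2) by (auto simp: supp_def)
    moreover have "\<eta> \<cdot> \<beta>\<^sup>-\<^sup>1 = \<alpha>"
      using p comp_comp_inverse_cancel by blast
    ultimately show "\<exists>\<beta>\<in>?S. p = (\<eta> \<cdot> \<beta>\<^sup>-\<^sup>1, \<beta>)"
      using p by auto
  qed auto
  then have "conv G f h \<eta> = (\<Sum>\<beta>\<in>?S. f (\<eta> \<cdot> \<beta>\<^sup>-\<^sup>1) * h \<beta>)"
    unfolding conv_def by (simp add: sum.reindex_bij_betw[symmetric])
  also have "\<dots> = (\<Sum>\<beta>\<in>S. f (\<eta> \<cdot> \<beta>\<^sup>-\<^sup>1) * h \<beta>)"
    using S(1) by (intro sum.mono_neutral_left) auto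
  finally show ?thesis .
qed

lemma conv_indicator_units:
  assumes f: "f \<in> steinberg G" and V: "V \<subseteq> units G"
  shows "conv G f (indicator V) \<gamma> = f \<gamma> * indicator V (src \<gamma>)"
proof (cases "\<gamma> \<in> arrows G")
  case False
  then show ?thesis
    using conv_outside_arrows steinberg_vanishes[OF f] by simp
next
  case True
  have "{\<beta> \<in> supp (indicator V). src \<beta> = src \<gamma>} \<subseteq> {src \<gamma>}"
    using V by (auto simp: supp_def indicator_def split: if_splits)
  then have "conv G f (indicator V) \<gamma> = f (\<gamma> \<cdot> (src \<gamma>)\<^sup>-\<^sup>1) * indicator V (src \<gamma>)"
    using conv_eq_sum_src_fibre[OF True, of "{src \<gamma>}"] True by simp
  then show ?thesis
    using True by simp
qed

lemma conv_eq_0_outside_closed_set: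
  assumes closed: "\<And>h1 h2. h1 \<in> H \<Longrightarrow> h2 \<in> H \<Longrightarrow> src h1 = rng h2 \<Longrightarrow> h1 \<cdot> h2 \<in> H"
    and "supp a \<subseteq> H" "supp b \<subseteq> H" "k \<notin> H"
  shows "conv G a b k = 0"
proof -
  have "a \<alpha> * b \<beta> = 0" if "\<alpha> \<in> arrows G" "\<beta> \<in> arrows G" "src \<alpha> = rng \<beta>" "\<alpha> \<cdot> \<beta> = k"
    for \<alpha> \<beta>
  proof (rule ccontr)
    assume "a \<alpha> * b \<beta> \<noteq> 0"
    then have "\<alpha> \<in> H" "\<beta> \<in> H"
      using assms(2,3) by (auto simp: supp_def)
    then show False
      using closed that assms(4) by blast
  qed
  then have "{(\<alpha>, \<beta>) \<in> composable G. \<alpha> \<cdot> \<beta> = k \<and> a \<alpha> * b \<beta> \<noteq> 0} = {}"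
    by (auto simp: composable_def)
  then show ?thesis
    unfolding conv_def by (simp only: sum.empty)
qed

lemma conv_conv_indicator_rng_fibre:
  assumes m: "m \<in> steinberg G" and V: "V \<subseteq> units G" and \<eta>: "\<eta> \<in> arrows G"
  shows "conv G (conv G m (indicator V)) n \<eta> =
    (\<Sum>\<alpha>\<in>{\<alpha> \<in> supp m. rng \<alpha> = rng \<eta>}. m \<alpha> * indicator V (src \<alpha>) * n (\<alpha>\<^sup>-\<^sup>1 \<cdot> \<eta>))"
proof -
  have "conv G (conv G m (indicator V)) n \<eta> =
      (\<Sum>\<alpha>\<in>{\<alpha> \<in> supp m. rng \<alpha> = rng \<eta>}. conv G m (indicator V) \<alpha> * n (\<alpha>\<^sup>-\<^sup>1 \<cdot> \<eta>))"
    using supp_steinberg_subset[OF m]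
    by (intro conv_eq_sum_rng_fibre[OF \<eta> finite_rng_fibre_supp[OF m]])
      (auto simp: conv_indicator_units[OF m V] supp_def)
  then show ?thesis
    by (simp add: conv_indicator_units[OF m V])
qed

lemma conv_conv_indicator_src_fibre:
  assumes m: "m \<in> steinberg G" and n: "n \<in> steinberg G" and V: "V \<subseteq> units G"
    and \<eta>: "\<eta> \<in> arrows G"
  shows "conv G (conv G m (indicator V)) n \<eta> =
    (\<Sum>\<gamma>\<in>{\<gamma> \<in> supp n. src \<gamma> = src \<eta>}. m (\<eta> \<cdot> \<gamma>\<^sup>-\<^sup>1) * indicator V (rng \<gamma>) * n \<gamma>)"
proof -
  have "conv G (conv G m (indicator V)) n \<eta> =
      (\<Sum>\<gamma>\<in>{\<gamma> \<in> supp n. src \<gamma> = src \<eta>}. conv G m (indicator V) (\<eta> \<cdot> \<gamma>\<^sup>-\<^sup>1) * n \<gamma>)"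
    using conv_eq_sum_src_fibre[OF \<eta> finite_src_fibre_supp[OF n]] supp_steinberg_subset[OF n]
    by auto
  also have "\<dots> = (\<Sum>\<gamma>\<in>{\<gamma> \<in> supp n. src \<gamma> = src \<eta>}. m (\<eta> \<cdot> \<gamma>\<^sup>-\<^sup>1) * indicator V (rng \<gamma>) * n \<gamma>)"
    using \<eta> supp_steinberg_subset[OF n]
    by (intro sum.cong) (auto simp: conv_indicator_units[OF m V])
  finally show ?thesis .
qed

lemma conv_conv_indicator_separated:
  assumes m: "m \<in> steinberg G" and V: "V \<subseteq> units G" and \<eta>: "\<eta> \<in> arrows G"
    and sep: "\<forall>\<alpha>\<in>supp m. rng \<alpha> = rng \<eta> \<longrightarrow> (src \<alpha> \<in> V \<longleftrightarrow> src \<alpha> = z)"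
  shows "conv G (conv G m (indicator V)) n \<eta> =
    (\<Sum>\<alpha>\<in>{\<alpha> \<in> supp m. rng \<alpha> = rng \<eta> \<and> src \<alpha> = z}. m \<alpha> * n (\<alpha>\<^sup>-\<^sup>1 \<cdot> \<eta>))"
  unfolding conv_conv_indicator_rng_fibre[OF m V \<eta>]
  using finite_rng_fibre_supp[OF m] sep
  by (intro sum.mono_neutral_cong_right) (auto simp: indicator_def)

lemma exists_separating_unit_nbhd:
  assumes f: "f \<in> steinberg G" and z: "z \<in> units G"
  obtains V where "openin (unit_top G) V" "compactin (unit_top G) V" "z \<in> V"
    "\<forall>\<alpha>\<in>supp f. rng \<alpha> = w \<longrightarrow> (src \<alpha> \<in> V \<longleftrightarrow> src \<alpha> = z)"
proof -
  have "finite (src ` {\<alpha> \<in> supp f. rng \<alpha> = w} - {z})"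
    using finite_rng_fibre_supp[OF f] by blast
  moreover have "z \<notin> src ` {\<alpha> \<in> supp f. rng \<alpha> = w} - {z}"
    by blast
  ultimately obtain V where V: "openin (unit_top G) V" "compactin (unit_top G) V" "z \<in> V"
      "V \<inter> (src ` {\<alpha> \<in> supp f. rng \<alpha> = w} - {z}) = {}"
    by (rule compact_open_unit_nbhd_avoiding[OF z])
  have "\<forall>\<alpha>\<in>supp f. rng \<alpha> = w \<longrightarrow> (src \<alpha> \<in> V \<longleftrightarrow> src \<alpha> = z)"
    using V(3,4) by blast
  with V(1-3) show thesis
    by (rule that)
qed

lemma normalisers_swap: "(m, n) \<in> normalisers G \<Longrightarrow> (n, m) \<in> normalisers G"
  unfolding normalisers_def by auto

lemma normalisers_imp_steinberg: "(m, n) \<in> normalisers G \<Longrightarrow> m \<in> steinberg G \<and> n \<in> steinberg G"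
  unfolding normalisers_def by auto

lemma normaliser_sandwich_vanishes:
  assumes "(m, n) \<in> normalisers G" "openin (unit_top G) V" "compactin (unit_top G) V" "\<eta> \<notin> units G"
  shows "conv G (conv G m (indicator V)) n \<eta> = 0"
proof -
  have "conv G (conv G m (indicator V)) n \<in> diag_sub G"
    using assms(1) indicator_in_diag_sub[OF assms(2,3)] unfolding normalisers_def by blast
  then show ?thesis
    using diag_sub_vanishes assms(4) by blast
qed

lemma conv_conv_eq_double_sum:
  assumes f: "f \<in> steinberg G" and h: "h \<in> steinberg G" and k: "k \<in> steinberg G"
    and \<eta>: "\<eta> \<in> arrows G"
  shows "conv G (conv G f h) k \<eta> =
    (\<Sum>\<alpha>\<in>{\<alpha> \<in> supp f. rng \<alpha> = rng \<eta>}. \<Sum>\<gamma>\<in>{\<gamma> \<in> supp k. src \<gamma> = src \<eta>}.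
       f \<alpha> * h (\<alpha>\<^sup>-\<^sup>1 \<cdot> (\<eta> \<cdot> \<gamma>\<^sup>-\<^sup>1)) * k \<gamma>)"
proof -
  let ?Fr = "{\<alpha> \<in> supp f. rng \<alpha> = rng \<eta>}" and ?Fs = "{\<gamma> \<in> supp k. src \<gamma> = src \<eta>}"
  have "conv G (conv G f h) k \<eta> = (\<Sum>\<gamma>\<in>?Fs. conv G f h (\<eta> \<cdot> \<gamma>\<^sup>-\<^sup>1) * k \<gamma>)"
    using supp_steinberg_subset[OF k]
    by (intro conv_eq_sum_src_fibre[OF \<eta> finite_src_fibre_supp[OF k]]) auto
  also have "\<dots> = (\<Sum>\<gamma>\<in>?Fs. (\<Sum>\<alpha>\<in>?Fr. f \<alpha> * h (\<alpha>\<^sup>-\<^sup>1 \<cdot> (\<eta> \<cdot> \<gamma>\<^sup>-\<^sup>1))) * k \<gamma>)"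
  proof (rule sum.cong[OF refl])
    fix \<gamma> assume "\<gamma> \<in> ?Fs"
    then have "\<eta> \<cdot> \<gamma>\<^sup>-\<^sup>1 \<in> arrows G" "rng (\<eta> \<cdot> \<gamma>\<^sup>-\<^sup>1) = rng \<eta>"
      using \<eta> supp_steinberg_subset[OF k] by auto
    then show "conv G f h (\<eta> \<cdot> \<gamma>\<^sup>-\<^sup>1) * k \<gamma> = (\<Sum>\<alpha>\<in>?Fr. f \<alpha> * h (\<alpha>\<^sup>-\<^sup>1 \<cdot> (\<eta> \<cdot> \<gamma>\<^sup>-\<^sup>1))) * k \<gamma>"
      using supp_steinberg_subset[OF f]
      by (subst conv_eq_sum_rng_fibre[OF _ finite_rng_fibre_supp[OF f]]) auto
  qed
  also have "\<dots> = (\<Sum>\<alpha>\<in>?Fr. \<Sum>\<gamma>\<in>?Fs. f \<alpha> * h (\<alpha>\<^sup>-\<^sup>1 \<cdot> (\<eta> \<cdot> \<gamma>\<^sup>-\<^sup>1)) * k \<gamma>)"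
    unfolding sum_distrib_right by (rule sum.swap)
  finally show ?thesis .
qed

lemma normaliser_row_vanishes:
  assumes N: "(m, n) \<in> normalisers G" and W: "openin (unit_top G) W" "compactin (unit_top G) W"
    and cover: "rng ` {\<gamma> \<in> supp m. src \<gamma> = src \<alpha>\<^sub>0} \<subseteq> W"
    and \<alpha>: "\<alpha> \<in> arrows G" "\<alpha>\<^sub>0 \<in> arrows G" "rng \<alpha> = rng \<alpha>\<^sub>0" "\<alpha> \<noteq> \<alpha>\<^sub>0"
  shows "(\<Sum>\<gamma>\<in>{\<gamma> \<in> supp m. src \<gamma> = src \<alpha>\<^sub>0}. n (\<alpha>\<^sup>-\<^sup>1 \<cdot> (\<alpha>\<^sub>0 \<cdot> \<gamma>\<^sup>-\<^sup>1)) * m \<gamma>) = 0"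
proof -
  let ?\<eta> = "\<alpha>\<^sup>-\<^sup>1 \<cdot> \<alpha>\<^sub>0"
  have m: "m \<in> steinberg G" and n: "n \<in> steinberg G"
    using normalisers_imp_steinberg[OF N] by blast+
  have WU: "W \<subseteq> units G"
    using W(1) by (rule openin_unit_top_subset)
  have \<eta>: "?\<eta> \<in> arrows G" "?\<eta> \<notin> units G" "src ?\<eta> = src \<alpha>\<^sub>0"
    using \<alpha> inverse_comp_in_units_iff by auto
  have "(\<Sum>\<gamma>\<in>{\<gamma> \<in> supp m. src \<gamma> = src \<alpha>\<^sub>0}. n (\<alpha>\<^sup>-\<^sup>1 \<cdot> (\<alpha>\<^sub>0 \<cdot> \<gamma>\<^sup>-\<^sup>1)) * m \<gamma>) =
      (\<Sum>\<gamma>\<in>{\<gamma> \<in> supp m. src \<gamma> = src ?\<eta>}. n (?\<eta> \<cdot> \<gamma>\<^sup>-\<^sup>1) * indicator W (rng \<gamma>) * m \<gamma>)"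
  proof (rule sum.cong)
    fix \<gamma> assume "\<gamma> \<in> {\<gamma> \<in> supp m. src \<gamma> = src ?\<eta>}"
    then have "\<gamma> \<in> arrows G" "src \<gamma> = src \<alpha>\<^sub>0" "rng \<gamma> \<in> W"
      using cover \<eta>(3) supp_steinberg_subset[OF m] by auto
    then show "n (\<alpha>\<^sup>-\<^sup>1 \<cdot> (\<alpha>\<^sub>0 \<cdot> \<gamma>\<^sup>-\<^sup>1)) * m \<gamma> = n (?\<eta> \<cdot> \<gamma>\<^sup>-\<^sup>1) * indicator W (rng \<gamma>) * m \<gamma>"
      using \<alpha> comp_assoc[of "\<alpha>\<^sup>-\<^sup>1" \<alpha>\<^sub>0 "\<gamma>\<^sup>-\<^sup>1"] by simp
  qed (use \<eta>(3) in simp)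
  also have "\<dots> = conv G (conv G n (indicator W)) m ?\<eta>"
    by (rule conv_conv_indicator_src_fibre[OF n m WU \<eta>(1), symmetric])
  also have "\<dots> = 0"
    by (rule normaliser_sandwich_vanishes[OF normalisers_swap[OF N] W \<eta>(2)])
  finally show ?thesis .
qed

lemma normaliser_column_vanishes:
  assumes N: "(m, n) \<in> normalisers G" and V: "openin (unit_top G) V" "compactin (unit_top G) V"
    and \<gamma>: "\<gamma> \<in> arrows G" "\<alpha>\<^sub>0 \<in> arrows G" "src \<gamma> = src \<alpha>\<^sub>0" "\<gamma> \<noteq> \<alpha>\<^sub>0"
  shows "(\<Sum>\<alpha>\<in>{\<alpha> \<in> supp m. rng \<alpha> = rng \<alpha>\<^sub>0}. m \<alpha> * indicator V (src \<alpha>) * n (\<alpha>\<^sup>-\<^sup>1 \<cdot> (\<alpha>\<^sub>0 \<cdot> \<gamma>\<^sup>-\<^sup>1))) = 0"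
proof -
  let ?\<eta> = "\<alpha>\<^sub>0 \<cdot> \<gamma>\<^sup>-\<^sup>1"
  have m: "m \<in> steinberg G"
    using normalisers_imp_steinberg[OF N] by blast
  have VU: "V \<subseteq> units G"
    using V(1) by (rule openin_unit_top_subset)
  have \<eta>: "?\<eta> \<in> arrows G" "?\<eta> \<notin> units G" "rng ?\<eta> = rng \<alpha>\<^sub>0"
    using \<gamma> comp_inverse_in_units_iff by auto
  have "0 = conv G (conv G m (indicator V)) n ?\<eta>"
    by (rule normaliser_sandwich_vanishes[OF N V \<eta>(2), symmetric])
  then show ?thesis
    unfolding conv_conv_indicator_rng_fibre[OF m VU \<eta>(1)] \<eta>(3) by simp
qed

(* Expand m n m = m at \<alpha>\<^sub>0 as a double sum over the range and source fibres of \<alpha>\<^sub>0 in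
   supp m: the off-diagonal rows and columns vanish, and what survives is
   (m 1\<^sub>V n)(r \<alpha>\<^sub>0) * m \<alpha>\<^sub>0. *)
lemma normaliser_sandwich_eq_one:
  fixes m n :: "'g \<Rightarrow> 'a::idom"
  assumes N: "(m, n) \<in> normalisers G" and \<alpha>\<^sub>0: "\<alpha>\<^sub>0 \<in> supp m"
    and V: "openin (unit_top G) V" "compactin (unit_top G) V" "src \<alpha>\<^sub>0 \<in> V"
  shows "conv G (conv G m (indicator V)) n (rng \<alpha>\<^sub>0) = 1"
proof -
  have m: "m \<in> steinberg G" and n: "n \<in> steinberg G"
    using normalisers_imp_steinberg[OF N] by blast+
  have \<alpha>\<^sub>0_arrow: "\<alpha>\<^sub>0 \<in> arrows G"
    using \<alpha>\<^sub>0 supp_steinberg_subset[OF m] by blast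
  define Fr where "Fr = {\<alpha> \<in> supp m. rng \<alpha> = rng \<alpha>\<^sub>0}"
  define Fs where "Fs = {\<gamma> \<in> supp m. src \<gamma> = src \<alpha>\<^sub>0}"
  define T where "T \<alpha> \<gamma> = m \<alpha> * n (\<alpha>\<^sup>-\<^sup>1 \<cdot> (\<alpha>\<^sub>0 \<cdot> \<gamma>\<^sup>-\<^sup>1)) * m \<gamma>" for \<alpha> \<gamma>
  have Fs: "finite Fs" "\<alpha>\<^sub>0 \<in> Fs" "Fs \<subseteq> arrows G"
    using finite_src_fibre_supp[OF m] \<alpha>\<^sub>0 supp_steinberg_subset[OF m] by (auto simp: Fs_def)
  then have "finite (rng ` Fs)" "rng ` Fs \<subseteq> units G"
    by auto
  then obtain W where W: "openin (unit_top G) W" "compactin (unit_top G) W" "rng ` Fs \<subseteq> W"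
    by (rule compact_open_units_cover)
  have "m \<alpha>\<^sub>0 = (\<Sum>\<alpha>\<in>Fr. \<Sum>\<gamma>\<in>Fs. T \<alpha> \<gamma>)"
    using N conv_conv_eq_double_sum[OF m n m \<alpha>\<^sub>0_arrow]
    unfolding normalisers_def Fr_def Fs_def T_def by simp
  also have "\<dots> = (\<Sum>\<alpha>\<in>Fr. indicator V (src \<alpha>) * T \<alpha> \<alpha>\<^sub>0)"
  proof (rule sum_sum_collapse_to_column[OF Fs(1,2)])
    fix \<alpha> assume "\<alpha> \<in> Fr" "\<alpha> \<noteq> \<alpha>\<^sub>0"
    then have "(\<Sum>\<gamma>\<in>Fs. n (\<alpha>\<^sup>-\<^sup>1 \<cdot> (\<alpha>\<^sub>0 \<cdot> \<gamma>\<^sup>-\<^sup>1)) * m \<gamma>) = 0"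
      using normaliser_row_vanishes[OF N W(1,2) W(3)[unfolded Fs_def]] \<alpha>\<^sub>0_arrow
        supp_steinberg_subset[OF m] by (auto simp: Fr_def Fs_def)
    then show "(\<Sum>\<gamma>\<in>Fs. T \<alpha> \<gamma>) = 0"
      unfolding T_def by (simp add: mult.assoc sum_distrib_left[symmetric])
  next
    fix \<gamma> assume "\<gamma> \<in> Fs" "\<gamma> \<noteq> \<alpha>\<^sub>0"
    then have "(\<Sum>\<alpha>\<in>Fr. m \<alpha> * indicator V (src \<alpha>) * n (\<alpha>\<^sup>-\<^sup>1 \<cdot> (\<alpha>\<^sub>0 \<cdot> \<gamma>\<^sup>-\<^sup>1))) * m \<gamma> = 0"
      using normaliser_column_vanishes[OF N V(1,2)] \<alpha>\<^sub>0_arrow Fs(3) by (auto simp: Fr_def Fs_def)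
    then show "(\<Sum>\<alpha>\<in>Fr. indicator V (src \<alpha>) * T \<alpha> \<gamma>) = 0"
      unfolding T_def sum_distrib_right by (simp add: ac_simps)
  qed (use V(3) in simp)
  also have "\<dots> = conv G (conv G m (indicator V)) n (rng \<alpha>\<^sub>0) * m \<alpha>\<^sub>0"
    using conv_conv_indicator_rng_fibre[OF m openin_unit_top_subset[OF V(1)]
        rng_in_arrows[OF \<alpha>\<^sub>0_arrow]]
      \<alpha>\<^sub>0_arrow
    unfolding T_def Fr_def by (simp add: ac_simps sum_distrib_left)
  finally show ?thesis
    using \<alpha>\<^sub>0 by (simp add: supp_def)
qed

end

locale graded_normaliser =
  fixes \<Gamma> :: "('c, 'm) monoid_scheme" and G :: "'g top_groupoid" and c :: "'g \<Rightarrow> 'c"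
    and g :: 'c and m n :: "'g \<Rightarrow> 'a::idom"
  assumes group: "group \<Gamma>"
    and class_C: "class_C TYPE('a) \<Gamma> G c"
    and degree: "g \<in> carrier \<Gamma>"
    and graded_normaliser: "(m, n) \<in> graded_normalisers G \<Gamma> c g"
begin

sublocale ample_groupoid G
  using class_C unfolding class_C_def by unfold_locales blast

lemma cocycle: "continuous_cocycle G \<Gamma> c"
  using class_C unfolding class_C_def by blast

lemma normaliser: "(m, n) \<in> normalisers G"
  using graded_normaliser unfolding graded_normalisers_def by blast

lemma m_steinberg: "m \<in> steinberg G" and n_steinberg: "n \<in> steinberg G"
  using normalisers_imp_steinberg[OF normaliser] by blast+

lemma supp_m_graded: "supp m \<subseteq> {\<eta> \<in> arrows G. c \<eta> = g}"
  and supp_n_graded: "supp n \<subseteq> {\<eta> \<in> arrows G. c \<eta> = inv\<^bsub>\<Gamma>\<^esub> g}"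
  using graded_normaliser unfolding graded_normalisers_def graded_part_def by blast+

lemma graded_normaliser_swap: "graded_normaliser \<Gamma> G c (inv\<^bsub>\<Gamma>\<^esub> g) n m"
  unfolding graded_normaliser_def
proof (intro conjI)
  show "inv\<^bsub>\<Gamma>\<^esub> g \<in> carrier \<Gamma>"
    using group.inv_closed[OF group degree] .
  show "(n, m) \<in> graded_normalisers G \<Gamma> c (inv\<^bsub>\<Gamma>\<^esub> g)"
    using graded_normaliser normalisers_swap group.inv_inv[OF group degree]
    unfolding graded_normalisers_def by auto
qed (use group class_C in simp_all)

lemma cocycle_in_carrier: "a \<in> arrows G \<Longrightarrow> c a \<in> carrier \<Gamma>"
  using cocycle unfolding continuous_cocycle_def by blast

lemma cocycle_comp:
  "a \<in> arrows G \<Longrightarrow> b \<in> arrows G \<Longrightarrow> src a = rng b \<Longrightarrow> c (a \<cdot> b) = c a \<otimes>\<^bsub>\<Gamma>\<^esub> c b"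
  using cocycle unfolding continuous_cocycle_def composable_def by blast

lemma cocycle_unit: "u \<in> units G \<Longrightarrow> c u = \<one>\<^bsub>\<Gamma>\<^esub>"
  using cocycle_comp[of u u] cocycle_in_carrier[of u] group.l_cancel_one[OF group]
  by (metis rng_comp_id rng_unit src_unit units_iff)

lemma cocycle_inverse: "a \<in> arrows G \<Longrightarrow> c (a\<^sup>-\<^sup>1) = inv\<^bsub>\<Gamma>\<^esub> (c a)"
  using cocycle_comp[of "a\<^sup>-\<^sup>1" a] cocycle_unit[of "src a"] cocycle_in_carrier
    group.inv_equality[OF group] by simp

lemma cocycle_inverse_comp:
  assumes "a \<in> arrows G" "b \<in> arrows G" "rng a = rng b" "c a = c b"
  shows "c (a\<^sup>-\<^sup>1 \<cdot> b) = \<one>\<^bsub>\<Gamma>\<^esub>"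
  using assms cocycle_comp[of "a\<^sup>-\<^sup>1" b] cocycle_inverse cocycle_in_carrier group.l_inv[OF group]
  by simp

definition isotropy_ker :: "'g \<Rightarrow> 'g set" where
  "isotropy_ker x = {\<eta> \<in> isotropy G x. c \<eta> = \<one>\<^bsub>\<Gamma>\<^esub>}"

definition trivial_units_at :: "'g \<Rightarrow> bool" where
  "trivial_units_at x \<longleftrightarrow> group_ring_trivial_units TYPE('a) G x (isotropy_ker x)"

lemma mem_isotropy_ker_iff:
  "h \<in> isotropy_ker x \<longleftrightarrow> h \<in> arrows G \<and> src h = x \<and> rng h = x \<and> c h = \<one>\<^bsub>\<Gamma>\<^esub>"
  unfolding isotropy_ker_def isotropy_def by auto

lemma unit_in_isotropy_ker: "x \<in> units G \<Longrightarrow> x \<in> isotropy_ker x"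
  using cocycle_unit units_subset_arrows by (auto simp: mem_isotropy_ker_iff)

lemma comp_in_isotropy_ker:
  "h \<in> isotropy_ker x \<Longrightarrow> k \<in> isotropy_ker x \<Longrightarrow> h \<cdot> k \<in> isotropy_ker x"
  using cocycle_comp[of h k] group.is_monoid[OF group] by (simp add: mem_isotropy_ker_iff)

lemma inverse_comp_in_isotropy_ker:
  "h \<in> isotropy_ker x \<Longrightarrow> k \<in> isotropy_ker x \<Longrightarrow> h\<^sup>-\<^sup>1 \<cdot> k \<in> isotropy_ker x"
  using cocycle_inverse_comp[of h k] by (simp add: mem_isotropy_ker_iff)

lemma conv_eq_0_outside_isotropy_ker:
  assumes "a \<in> group_ring (isotropy_ker x)" "b \<in> group_ring (isotropy_ker x)" "k \<notin> isotropy_ker x"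
  shows "conv G a b k = 0"
  using assms comp_in_isotropy_ker
  by (intro conv_eq_0_outside_closed_set[of "isotropy_ker x"]) (auto simp: group_ring_def)

end

locale isotropy_point = graded_normaliser +
  fixes \<alpha>\<^sub>0
  assumes \<alpha>\<^sub>0_supp: "\<alpha>\<^sub>0 \<in> supp m"
begin

lemma \<alpha>\<^sub>0_arrow: "\<alpha>\<^sub>0 \<in> arrows G" and \<alpha>\<^sub>0_degree: "c \<alpha>\<^sub>0 = g"
  using \<alpha>\<^sub>0_supp supp_m_graded by blast+

definition m_iso where
  "m_iso h = (if h \<in> isotropy_ker (src \<alpha>\<^sub>0) then m (\<alpha>\<^sub>0 \<cdot> h) else 0)"

definition n_iso where
  "n_iso h = (if h \<in> isotropy_ker (src \<alpha>\<^sub>0) then n (h \<cdot> \<alpha>\<^sub>0\<^sup>-\<^sup>1) else 0)"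

lemma translate_m_in_isotropy_ker:
  assumes "\<alpha> \<in> supp m" "src \<alpha> = src \<alpha>\<^sub>0" "rng \<alpha> = rng \<alpha>\<^sub>0"
  shows "\<alpha>\<^sub>0\<^sup>-\<^sup>1 \<cdot> \<alpha> \<in> isotropy_ker (src \<alpha>\<^sub>0)"
  using assms supp_m_graded \<alpha>\<^sub>0_arrow \<alpha>\<^sub>0_degree cocycle_inverse_comp[of \<alpha>\<^sub>0 \<alpha>]
  by (auto simp: mem_isotropy_ker_iff)

lemma translate_n_in_isotropy_ker:
  assumes "\<beta> \<in> supp n" "src \<beta> = rng \<alpha>\<^sub>0" "rng \<beta> = src \<alpha>\<^sub>0"
  shows "\<beta> \<cdot> \<alpha>\<^sub>0 \<in> isotropy_ker (src \<alpha>\<^sub>0)"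
proof -
  have "\<beta> \<in> arrows G" "c \<beta> = inv\<^bsub>\<Gamma>\<^esub> g"
    using assms(1) supp_n_graded by blast+
  moreover from this have "c (\<beta> \<cdot> \<alpha>\<^sub>0) = \<one>\<^bsub>\<Gamma>\<^esub>"
    using assms \<alpha>\<^sub>0_arrow \<alpha>\<^sub>0_degree cocycle_comp group.l_inv[OF group degree] by simp
  ultimately show ?thesis
    using assms \<alpha>\<^sub>0_arrow by (simp add: mem_isotropy_ker_iff)
qed

lemma supp_m_iso_subset:
  "supp m_iso \<subseteq> (\<lambda>\<alpha>. \<alpha>\<^sub>0\<^sup>-\<^sup>1 \<cdot> \<alpha>) ` {\<alpha> \<in> supp m. rng \<alpha> = rng \<alpha>\<^sub>0 \<and> src \<alpha> = src \<alpha>\<^sub>0}"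
proof
  fix h assume "h \<in> supp m_iso"
  then have h: "h \<in> isotropy_ker (src \<alpha>\<^sub>0)" "\<alpha>\<^sub>0 \<cdot> h \<in> supp m"
    by (auto simp: m_iso_def supp_def split: if_splits)
  then have "h \<in> arrows G" "src h = src \<alpha>\<^sub>0" "rng h = src \<alpha>\<^sub>0"
    by (simp_all add: mem_isotropy_ker_iff)
  then show "h \<in> (\<lambda>\<alpha>. \<alpha>\<^sub>0\<^sup>-\<^sup>1 \<cdot> \<alpha>) ` {\<alpha> \<in> supp m. rng \<alpha> = rng \<alpha>\<^sub>0 \<and> src \<alpha> = src \<alpha>\<^sub>0}"
    using h(2) \<alpha>\<^sub>0_arrow inverse_comp_cancel[of \<alpha>\<^sub>0 h] by (intro rev_image_eqI[of "\<alpha>\<^sub>0 \<cdot> h"]) auto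
qed

lemma supp_n_iso_subset:
  "supp n_iso \<subseteq> (\<lambda>\<beta>. \<beta> \<cdot> \<alpha>\<^sub>0) ` {\<beta> \<in> supp n. rng \<beta> = src \<alpha>\<^sub>0 \<and> src \<beta> = rng \<alpha>\<^sub>0}"
proof
  fix h assume "h \<in> supp n_iso"
  then have h: "h \<in> isotropy_ker (src \<alpha>\<^sub>0)" "h \<cdot> \<alpha>\<^sub>0\<^sup>-\<^sup>1 \<in> supp n"
    by (auto simp: n_iso_def supp_def split: if_splits)
  then have "h \<in> arrows G" "src h = src \<alpha>\<^sub>0" "rng h = src \<alpha>\<^sub>0"
    by (simp_all add: mem_isotropy_ker_iff)
  then show "h \<in> (\<lambda>\<beta>. \<beta> \<cdot> \<alpha>\<^sub>0) ` {\<beta> \<in> supp n. rng \<beta> = src \<alpha>\<^sub>0 \<and> src \<beta> = rng \<alpha>\<^sub>0}"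
    using h(2) \<alpha>\<^sub>0_arrow comp_inverse_comp_cancel[of h \<alpha>\<^sub>0]
    by (intro rev_image_eqI[of "h \<cdot> \<alpha>\<^sub>0\<^sup>-\<^sup>1"]) auto
qed

lemma m_iso_in_group_ring: "m_iso \<in> group_ring (isotropy_ker (src \<alpha>\<^sub>0))"
  and n_iso_in_group_ring: "n_iso \<in> group_ring (isotropy_ker (src \<alpha>\<^sub>0))"
proof -
  have "finite {\<alpha> \<in> supp m. rng \<alpha> = rng \<alpha>\<^sub>0 \<and> src \<alpha> = src \<alpha>\<^sub>0}"
    using finite_rng_fibre_supp[OF m_steinberg] by (rule finite_subset[rotated]) blast
  moreover have "finite {\<beta> \<in> supp n. rng \<beta> = src \<alpha>\<^sub>0 \<and> src \<beta> = rng \<alpha>\<^sub>0}"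
    using finite_rng_fibre_supp[OF n_steinberg] by (rule finite_subset[rotated]) blast
  ultimately show "m_iso \<in> group_ring (isotropy_ker (src \<alpha>\<^sub>0))"
    "n_iso \<in> group_ring (isotropy_ker (src \<alpha>\<^sub>0))"
    using supp_m_iso_subset supp_n_iso_subset finite_subset
    unfolding group_ring_def by (auto simp: m_iso_def n_iso_def supp_def split: if_splits)
qed

lemma conv_m_iso_n_iso_eq_sandwich:
  assumes V: "V \<subseteq> units G" "\<forall>\<alpha>\<in>supp m. rng \<alpha> = rng \<alpha>\<^sub>0 \<longrightarrow> (src \<alpha> \<in> V \<longleftrightarrow> src \<alpha> = src \<alpha>\<^sub>0)"
    and k: "k \<in> isotropy_ker (src \<alpha>\<^sub>0)"
  shows "conv G m_iso n_iso k = conv G (conv G m (indicator V)) n (\<alpha>\<^sub>0 \<cdot> (k \<cdot> \<alpha>\<^sub>0\<^sup>-\<^sup>1))"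
proof -
  let ?S = "{\<alpha> \<in> supp m. rng \<alpha> = rng \<alpha>\<^sub>0 \<and> src \<alpha> = src \<alpha>\<^sub>0}"
  let ?\<eta> = "\<alpha>\<^sub>0 \<cdot> (k \<cdot> \<alpha>\<^sub>0\<^sup>-\<^sup>1)"
  have k_arrow: "k \<in> arrows G" "src k = src \<alpha>\<^sub>0" "rng k = src \<alpha>\<^sub>0"
    using k by (simp_all add: mem_isotropy_ker_iff)
  have S: "finite ?S" "?S \<subseteq> {\<alpha> \<in> arrows G. rng \<alpha> = rng \<alpha>\<^sub>0}"
    using finite_rng_fibre_supp[OF m_steinberg] supp_steinberg_subset[OF m_steinberg]
    by (auto intro: finite_subset[rotated])
  have \<eta>: "?\<eta> \<in> arrows G" "rng ?\<eta> = rng \<alpha>\<^sub>0"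
    using k_arrow \<alpha>\<^sub>0_arrow by simp_all
  have "conv G m_iso n_iso k = (\<Sum>h\<in>(\<lambda>\<alpha>. \<alpha>\<^sub>0\<^sup>-\<^sup>1 \<cdot> \<alpha>) ` ?S. m_iso h * n_iso (h\<^sup>-\<^sup>1 \<cdot> k))"
    using S supp_m_iso_subset k_arrow \<alpha>\<^sub>0_arrow by (intro conv_eq_sum_rng_fibre) auto
  also have "\<dots> = (\<Sum>\<alpha>\<in>?S. m_iso (\<alpha>\<^sub>0\<^sup>-\<^sup>1 \<cdot> \<alpha>) * n_iso ((\<alpha>\<^sub>0\<^sup>-\<^sup>1 \<cdot> \<alpha>)\<^sup>-\<^sup>1 \<cdot> k))"
    using sum.reindex[OF inj_on_subset[OF inj_on_inverse_comp_left[OF \<alpha>\<^sub>0_arrow] S(2)]] by simp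
  also have "\<dots> = (\<Sum>\<alpha>\<in>?S. m \<alpha> * n (\<alpha>\<^sup>-\<^sup>1 \<cdot> ?\<eta>))"
  proof (rule sum.cong[OF refl])
    fix \<alpha> assume \<alpha>: "\<alpha> \<in> ?S"
    let ?h = "\<alpha>\<^sub>0\<^sup>-\<^sup>1 \<cdot> \<alpha>"
    have h: "?h \<in> isotropy_ker (src \<alpha>\<^sub>0)" "?h\<^sup>-\<^sup>1 \<cdot> k \<in> isotropy_ker (src \<alpha>\<^sub>0)"
      using translate_m_in_isotropy_ker \<alpha> inverse_comp_in_isotropy_ker k by auto
    have "\<alpha> \<in> arrows G"
      using \<alpha> S(2) by blast
    then have "\<alpha>\<^sub>0 \<cdot> ?h = \<alpha>" "(?h\<^sup>-\<^sup>1 \<cdot> k) \<cdot> \<alpha>\<^sub>0\<^sup>-\<^sup>1 = \<alpha>\<^sup>-\<^sup>1 \<cdot> ?\<eta>"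
      using \<alpha> \<alpha>\<^sub>0_arrow k_arrow comp_inverse_cancel
      by (simp_all add: inverse_comp_distrib comp_assoc)
    then show "m_iso ?h * n_iso (?h\<^sup>-\<^sup>1 \<cdot> k) = m \<alpha> * n (\<alpha>\<^sup>-\<^sup>1 \<cdot> ?\<eta>)"
      using h by (simp add: m_iso_def n_iso_def)
  qed
  also have "\<dots> = conv G (conv G m (indicator V)) n ?\<eta>"
    using conv_conv_indicator_separated[OF m_steinberg V(1) \<eta>(1), of "src \<alpha>\<^sub>0" n] V(2) \<eta>(2)
    by simp
  finally show ?thesis .
qed

lemma conv_n_iso_m_iso_eq_sandwich:
  assumes W: "W \<subseteq> units G" "\<forall>\<beta>\<in>supp n. rng \<beta> = src \<alpha>\<^sub>0 \<longrightarrow> (src \<beta> \<in> W \<longleftrightarrow> src \<beta> = rng \<alpha>\<^sub>0)"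
    and k: "k \<in> isotropy_ker (src \<alpha>\<^sub>0)"
  shows "conv G n_iso m_iso k = conv G (conv G n (indicator W)) m k"
proof -
  let ?S = "{\<beta> \<in> supp n. rng \<beta> = src \<alpha>\<^sub>0 \<and> src \<beta> = rng \<alpha>\<^sub>0}"
  have k_arrow: "k \<in> arrows G" "src k = src \<alpha>\<^sub>0" "rng k = src \<alpha>\<^sub>0"
    using k by (simp_all add: mem_isotropy_ker_iff)
  have S: "finite ?S" "?S \<subseteq> {\<beta> \<in> arrows G. src \<beta> = rng \<alpha>\<^sub>0}"
    using finite_rng_fibre_supp[OF n_steinberg] supp_steinberg_subset[OF n_steinberg]
    by (auto intro: finite_subset[rotated])
  have "conv G n_iso m_iso k = (\<Sum>h\<in>(\<lambda>\<beta>. \<beta> \<cdot> \<alpha>\<^sub>0) ` ?S. n_iso h * m_iso (h\<^sup>-\<^sup>1 \<cdot> k))"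
    using S supp_n_iso_subset k_arrow \<alpha>\<^sub>0_arrow by (intro conv_eq_sum_rng_fibre) auto
  also have "\<dots> = (\<Sum>\<beta>\<in>?S. n_iso (\<beta> \<cdot> \<alpha>\<^sub>0) * m_iso ((\<beta> \<cdot> \<alpha>\<^sub>0)\<^sup>-\<^sup>1 \<cdot> k))"
    using sum.reindex[OF inj_on_subset[OF inj_on_comp_right[OF \<alpha>\<^sub>0_arrow] S(2)]] by simp
  also have "\<dots> = (\<Sum>\<beta>\<in>?S. n \<beta> * m (\<beta>\<^sup>-\<^sup>1 \<cdot> k))"
  proof (rule sum.cong[OF refl])
    fix \<beta> assume \<beta>: "\<beta> \<in> ?S"
    let ?h = "\<beta> \<cdot> \<alpha>\<^sub>0"
    have h: "?h \<in> isotropy_ker (src \<alpha>\<^sub>0)" "?h\<^sup>-\<^sup>1 \<cdot> k \<in> isotropy_ker (src \<alpha>\<^sub>0)"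
      using translate_n_in_isotropy_ker \<beta> inverse_comp_in_isotropy_ker k by auto
    have "\<beta> \<in> arrows G"
      using \<beta> S(2) by blast
    then have "?h \<cdot> \<alpha>\<^sub>0\<^sup>-\<^sup>1 = \<beta>" "\<alpha>\<^sub>0 \<cdot> (?h\<^sup>-\<^sup>1 \<cdot> k) = \<beta>\<^sup>-\<^sup>1 \<cdot> k"
      using \<beta> \<alpha>\<^sub>0_arrow k_arrow comp_comp_inverse_cancel
      by (simp_all add: inverse_comp_distrib comp_assoc comp_inverse_cancel)
    then show "n_iso ?h * m_iso (?h\<^sup>-\<^sup>1 \<cdot> k) = n \<beta> * m (\<beta>\<^sup>-\<^sup>1 \<cdot> k)"
      using h by (simp add: m_iso_def n_iso_def)
  qed
  also have "\<dots> = conv G (conv G n (indicator W)) m k"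
    using conv_conv_indicator_separated[OF n_steinberg W(1) k_arrow(1), of "rng \<alpha>\<^sub>0" m]
      W(2) k_arrow(3)
    by simp
  finally show ?thesis .
qed

lemma conv_m_iso_n_iso: "conv G m_iso n_iso = indicator {src \<alpha>\<^sub>0}"
proof
  fix k
  obtain V where V: "openin (unit_top G) V" "compactin (unit_top G) V" "src \<alpha>\<^sub>0 \<in> V"
      "\<forall>\<alpha>\<in>supp m. rng \<alpha> = rng \<alpha>\<^sub>0 \<longrightarrow> (src \<alpha> \<in> V \<longleftrightarrow> src \<alpha> = src \<alpha>\<^sub>0)"
    by (rule exists_separating_unit_nbhd[OF m_steinberg src_in_units[OF \<alpha>\<^sub>0_arrow]])
  have VU: "V \<subseteq> units G"
    using V(1) by (rule openin_unit_top_subset)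
  show "conv G m_iso n_iso k = indicator {src \<alpha>\<^sub>0} k"
  proof (cases "k \<in> isotropy_ker (src \<alpha>\<^sub>0)")
    case False
    moreover have "src \<alpha>\<^sub>0 \<in> isotropy_ker (src \<alpha>\<^sub>0)"
      using unit_in_isotropy_ker \<alpha>\<^sub>0_arrow by simp
    ultimately show ?thesis
      using conv_eq_0_outside_isotropy_ker[OF m_iso_in_group_ring n_iso_in_group_ring]
      by (auto simp: indicator_def)
  next
    case True
    then have k: "k \<in> arrows G" "src k = src \<alpha>\<^sub>0" "rng k = src \<alpha>\<^sub>0"
      by (simp_all add: mem_isotropy_ker_iff)
    show ?thesis
    proof (cases "k = src \<alpha>\<^sub>0")
      case True
      then have "\<alpha>\<^sub>0 \<cdot> (k \<cdot> \<alpha>\<^sub>0\<^sup>-\<^sup>1) = rng \<alpha>\<^sub>0"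
        using \<alpha>\<^sub>0_arrow rng_comp_id[of "\<alpha>\<^sub>0\<^sup>-\<^sup>1"] by simp
      then show ?thesis
        using conv_m_iso_n_iso_eq_sandwich[OF VU V(4) \<open>k \<in> isotropy_ker (src \<alpha>\<^sub>0)\<close>] True
          normaliser_sandwich_eq_one[OF normaliser \<alpha>\<^sub>0_supp V(1-3)] by simp
    next
      case False
      then have "\<alpha>\<^sub>0 \<cdot> (k \<cdot> \<alpha>\<^sub>0\<^sup>-\<^sup>1) \<notin> units G"
        using conjugate_in_units_iff[OF \<alpha>\<^sub>0_arrow k] by simp
      then show ?thesis
        using conv_m_iso_n_iso_eq_sandwich[OF VU V(4) \<open>k \<in> isotropy_ker (src \<alpha>\<^sub>0)\<close>] False
          normaliser_sandwich_vanishes[OF normaliser V(1,2)] by simp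
    qed
  qed
qed

lemma sum_parallel_eq_one:
  "(\<Sum>\<alpha>\<in>{\<alpha> \<in> supp m. rng \<alpha> = rng \<alpha>\<^sub>0 \<and> src \<alpha> = src \<alpha>\<^sub>0}. m \<alpha> * n (\<alpha>\<^sup>-\<^sup>1)) = 1"
proof -
  obtain V where V: "openin (unit_top G) V" "compactin (unit_top G) V" "src \<alpha>\<^sub>0 \<in> V"
      "\<forall>\<alpha>\<in>supp m. rng \<alpha> = rng (rng \<alpha>\<^sub>0) \<longrightarrow> (src \<alpha> \<in> V \<longleftrightarrow> src \<alpha> = src \<alpha>\<^sub>0)"
    by (rule exists_separating_unit_nbhd[OF m_steinberg src_in_units[OF \<alpha>\<^sub>0_arrow]])
  have VU: "V \<subseteq> units G"
    using V(1) by (rule openin_unit_top_subset)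
  have "1 = conv G (conv G m (indicator V)) n (rng \<alpha>\<^sub>0)"
    using normaliser_sandwich_eq_one[OF normaliser \<alpha>\<^sub>0_supp V(1-3)] by simp
  also have "\<dots> = (\<Sum>\<alpha>\<in>{\<alpha> \<in> supp m. rng \<alpha> = rng \<alpha>\<^sub>0 \<and> src \<alpha> = src \<alpha>\<^sub>0}. m \<alpha> * n (\<alpha>\<^sup>-\<^sup>1 \<cdot> rng \<alpha>\<^sub>0))"
    using conv_conv_indicator_separated[OF m_steinberg VU _ V(4)] \<alpha>\<^sub>0_arrow by simp
  also have "\<dots> = (\<Sum>\<alpha>\<in>{\<alpha> \<in> supp m. rng \<alpha> = rng \<alpha>\<^sub>0 \<and> src \<alpha> = src \<alpha>\<^sub>0}. m \<alpha> * n (\<alpha>\<^sup>-\<^sup>1))"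
  proof (rule sum.cong[OF refl])
    fix \<alpha> assume "\<alpha> \<in> {\<alpha> \<in> supp m. rng \<alpha> = rng \<alpha>\<^sub>0 \<and> src \<alpha> = src \<alpha>\<^sub>0}"
    then have "\<alpha> \<in> arrows G" "rng \<alpha> = rng \<alpha>\<^sub>0"
      using supp_steinberg_subset[OF m_steinberg] by auto
    then show "m \<alpha> * n (\<alpha>\<^sup>-\<^sup>1 \<cdot> rng \<alpha>\<^sub>0) = m \<alpha> * n (\<alpha>\<^sup>-\<^sup>1)"
      using comp_src_id[of "\<alpha>\<^sup>-\<^sup>1"] by simp
  qed
  finally show ?thesis ..
qed

lemma exists_partner_in_supp_n:
  obtains \<beta> where "\<beta> \<in> supp n" "rng \<beta> = src \<alpha>\<^sub>0" "src \<beta> = rng \<alpha>\<^sub>0"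
proof -
  have "\<exists>\<alpha>\<in>{\<alpha> \<in> supp m. rng \<alpha> = rng \<alpha>\<^sub>0 \<and> src \<alpha> = src \<alpha>\<^sub>0}. m \<alpha> * n (\<alpha>\<^sup>-\<^sup>1) \<noteq> 0"
    using sum_parallel_eq_one by (metis (no_types, lifting) sum.neutral zero_neq_one)
  then obtain \<alpha> where \<alpha>: "\<alpha> \<in> supp m" "rng \<alpha> = rng \<alpha>\<^sub>0" "src \<alpha> = src \<alpha>\<^sub>0" "n (\<alpha>\<^sup>-\<^sup>1) \<noteq> 0"
    by auto
  moreover have "\<alpha> \<in> arrows G"
    using \<alpha>(1) supp_steinberg_subset[OF m_steinberg] by blast
  ultimately show thesis
    using that[of "\<alpha>\<^sup>-\<^sup>1"] by (simp add: supp_def)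
qed

lemma conv_n_iso_m_iso: "conv G n_iso m_iso = indicator {src \<alpha>\<^sub>0}"
proof
  fix k
  obtain \<beta>\<^sub>0 where \<beta>\<^sub>0: "\<beta>\<^sub>0 \<in> supp n" "rng \<beta>\<^sub>0 = src \<alpha>\<^sub>0" "src \<beta>\<^sub>0 = rng \<alpha>\<^sub>0"
    by (rule exists_partner_in_supp_n)
  obtain W where W: "openin (unit_top G) W" "compactin (unit_top G) W" "rng \<alpha>\<^sub>0 \<in> W"
      "\<forall>\<beta>\<in>supp n. rng \<beta> = src \<alpha>\<^sub>0 \<longrightarrow> (src \<beta> \<in> W \<longleftrightarrow> src \<beta> = rng \<alpha>\<^sub>0)"
    by (rule exists_separating_unit_nbhd[OF n_steinberg rng_in_units[OF \<alpha>\<^sub>0_arrow]])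
  have WU: "W \<subseteq> units G"
    using W(1) by (rule openin_unit_top_subset)
  show "conv G n_iso m_iso k = indicator {src \<alpha>\<^sub>0} k"
  proof (cases "k \<in> isotropy_ker (src \<alpha>\<^sub>0)")
    case False
    moreover have "src \<alpha>\<^sub>0 \<in> isotropy_ker (src \<alpha>\<^sub>0)"
      using unit_in_isotropy_ker \<alpha>\<^sub>0_arrow by simp
    ultimately show ?thesis
      using conv_eq_0_outside_isotropy_ker[OF n_iso_in_group_ring m_iso_in_group_ring]
      by (auto simp: indicator_def)
  next
    case True
    then have k: "k \<in> arrows G" "rng k = src \<alpha>\<^sub>0"
      by (simp_all add: mem_isotropy_ker_iff)
    show ?thesis
    proof (cases "k = src \<alpha>\<^sub>0")
      case True
      then show ?thesis
        using conv_n_iso_m_iso_eq_sandwich[OF WU W(4) \<open>k \<in> isotropy_ker (src \<alpha>\<^sub>0)\<close>] \<beta>\<^sub>0 W(3)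
          normaliser_sandwich_eq_one[OF normalisers_swap[OF normaliser] \<beta>\<^sub>0(1) W(1,2)] by simp
    next
      case False
      then have "k \<notin> units G"
        using k by (auto simp: units_iff)
      then show ?thesis
        using conv_n_iso_m_iso_eq_sandwich[OF WU W(4) \<open>k \<in> isotropy_ker (src \<alpha>\<^sub>0)\<close>] False
          normaliser_sandwich_vanishes[OF normalisers_swap[OF normaliser] W(1,2)] by simp
    qed
  qed
qed

lemma m_iso_eq_point_mass:
  assumes trivial_units: "trivial_units_at (src \<alpha>\<^sub>0)"
  shows "m_iso = (\<lambda>h. if h = src \<alpha>\<^sub>0 then m \<alpha>\<^sub>0 else 0)"
proof -
  have "\<exists>u. \<exists>h\<^sub>0\<in>isotropy_ker (src \<alpha>\<^sub>0). m_iso = (\<lambda>h. if h = h\<^sub>0 then u else 0)"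
    using trivial_units m_iso_in_group_ring n_iso_in_group_ring conv_m_iso_n_iso conv_n_iso_m_iso
    unfolding trivial_units_at_def group_ring_trivial_units_def by blast
  then obtain u h\<^sub>0 where h\<^sub>0: "m_iso = (\<lambda>h. if h = h\<^sub>0 then u else 0)"
    by blast
  have "m_iso (src \<alpha>\<^sub>0) = m \<alpha>\<^sub>0"
    using unit_in_isotropy_ker[of "src \<alpha>\<^sub>0"] \<alpha>\<^sub>0_arrow by (simp add: m_iso_def)
  then have "h\<^sub>0 = src \<alpha>\<^sub>0" "u = m \<alpha>\<^sub>0"
    using h\<^sub>0 \<alpha>\<^sub>0_supp by (auto simp: supp_def split: if_splits)
  then show ?thesis
    using h\<^sub>0 by auto
qed

lemma supp_m_parallel_unique:
  assumes trivial_units: "trivial_units_at (src \<alpha>\<^sub>0)"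
    and \<alpha>: "\<alpha> \<in> supp m" "src \<alpha> = src \<alpha>\<^sub>0" "rng \<alpha> = rng \<alpha>\<^sub>0"
  shows "\<alpha> = \<alpha>\<^sub>0"
proof -
  have \<alpha>_arrow: "\<alpha> \<in> arrows G"
    using \<alpha>(1) supp_steinberg_subset[OF m_steinberg] by blast
  have \<alpha>_eq: "\<alpha>\<^sub>0 \<cdot> (\<alpha>\<^sub>0\<^sup>-\<^sup>1 \<cdot> \<alpha>) = \<alpha>"
    using comp_inverse_cancel \<alpha>\<^sub>0_arrow \<alpha>_arrow \<alpha>(3) by simp
  then have "m_iso (\<alpha>\<^sub>0\<^sup>-\<^sup>1 \<cdot> \<alpha>) = m \<alpha>"
    using translate_m_in_isotropy_ker[OF \<alpha>] by (simp add: m_iso_def)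
  then have "\<alpha>\<^sub>0\<^sup>-\<^sup>1 \<cdot> \<alpha> = src \<alpha>\<^sub>0"
    using m_iso_eq_point_mass[OF trivial_units] \<alpha>(1) by (auto simp: supp_def split: if_splits)
  then show ?thesis
    using \<alpha>_eq \<alpha>\<^sub>0_arrow by simp
qed

lemma m_mult_n_inverse_eq_one:
  assumes trivial_units: "trivial_units_at (src \<alpha>\<^sub>0)"
  shows "m \<alpha>\<^sub>0 * n (\<alpha>\<^sub>0\<^sup>-\<^sup>1) = 1"
proof -
  have "{\<alpha> \<in> supp m. rng \<alpha> = rng \<alpha>\<^sub>0 \<and> src \<alpha> = src \<alpha>\<^sub>0} = {\<alpha>\<^sub>0}"
    using supp_m_parallel_unique[OF trivial_units] \<alpha>\<^sub>0_supp by blast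
  then show ?thesis
    using sum_parallel_eq_one by simp
qed

end

context graded_normaliser
begin

lemma dense_trivial_units:
  assumes "openin (unit_top G) U" "U \<noteq> {}"
  obtains x where "x \<in> U" "trivial_units_at x"
proof -
  obtain X where X: "unit_top G closure_of X = units G"
      "\<forall>x\<in>X. group_ring_trivial_units TYPE('a) G x {\<eta> \<in> isotropy G x. c \<eta> = \<one>\<^bsub>\<Gamma>\<^esub>}"
    using class_C unfolding class_C_def by blast
  obtain y where "y \<in> U"
    using assms(2) by blast
  then have "y \<in> unit_top G closure_of X"
    using X(1) openin_subset[OF assms(1)] topspace_unit_top by auto
  then obtain x where "x \<in> X" "x \<in> U"
    using assms(1) \<open>y \<in> U\<close> unfolding in_closure_of by blast
  then show thesis
    using that X(2) by (auto simp: trivial_units_at_def isotropy_ker_def)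
qed

lemma isotropy_pointI: "\<alpha> \<in> supp m \<Longrightarrow> isotropy_point \<Gamma> G c g m n \<alpha>"
  using graded_normaliser_axioms by (simp add: isotropy_point_def isotropy_point_axioms_def)

lemma supp_m_src_fibre_unique:
  assumes "trivial_units_at x" and \<alpha>\<^sub>1: "\<alpha>\<^sub>1 \<in> supp m" "src \<alpha>\<^sub>1 = x" and \<alpha>\<^sub>2: "\<alpha>\<^sub>2 \<in> supp m" "src \<alpha>\<^sub>2 = x"
  shows "\<alpha>\<^sub>1 = \<alpha>\<^sub>2"
proof (rule ccontr)
  assume ne: "\<alpha>\<^sub>1 \<noteq> \<alpha>\<^sub>2"
  interpret p\<^sub>1: isotropy_point \<Gamma> G c g m n \<alpha>\<^sub>1 using isotropy_pointI \<alpha>\<^sub>1(1) .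
  interpret p\<^sub>2: isotropy_point \<Gamma> G c g m n \<alpha>\<^sub>2 using isotropy_pointI \<alpha>\<^sub>2(1) .
  have arrows: "\<alpha>\<^sub>1 \<in> arrows G" "\<alpha>\<^sub>2 \<in> arrows G"
    using \<alpha>\<^sub>1 \<alpha>\<^sub>2 supp_steinberg_subset[OF m_steinberg] by blast+
  let ?\<eta> = "\<alpha>\<^sub>2 \<cdot> \<alpha>\<^sub>1\<^sup>-\<^sup>1"
  have \<eta>: "?\<eta> \<in> arrows G" "?\<eta> \<notin> units G" "rng ?\<eta> = rng \<alpha>\<^sub>2"
    using arrows \<alpha>\<^sub>1(2) \<alpha>\<^sub>2(2) ne comp_inverse_in_units_iff[of \<alpha>\<^sub>2 \<alpha>\<^sub>1] by auto
  obtain V where V: "openin (unit_top G) V" "compactin (unit_top G) V" "src \<alpha>\<^sub>2 \<in> V"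
      "\<forall>\<alpha>\<in>supp m. rng \<alpha> = rng ?\<eta> \<longrightarrow> (src \<alpha> \<in> V \<longleftrightarrow> src \<alpha> = src \<alpha>\<^sub>2)"
    by (rule exists_separating_unit_nbhd[OF m_steinberg src_in_units[OF arrows(2)]])
  have VU: "V \<subseteq> units G"
    using V(1) by (rule openin_unit_top_subset)
  have "{\<alpha> \<in> supp m. rng \<alpha> = rng ?\<eta> \<and> src \<alpha> = src \<alpha>\<^sub>2} = {\<alpha>\<^sub>2}"
    using p\<^sub>2.supp_m_parallel_unique assms(1) \<alpha>\<^sub>2 \<eta>(3) by auto
  then have "0 = m \<alpha>\<^sub>2 * n (\<alpha>\<^sub>2\<^sup>-\<^sup>1 \<cdot> ?\<eta>)"
    using normaliser_sandwich_vanishes[OF normaliser V(1,2) \<eta>(2)]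
      conv_conv_indicator_separated[OF m_steinberg VU \<eta>(1) V(4)] by simp
  also have "\<alpha>\<^sub>2\<^sup>-\<^sup>1 \<cdot> ?\<eta> = \<alpha>\<^sub>1\<^sup>-\<^sup>1"
    using arrows \<alpha>\<^sub>1(2) \<alpha>\<^sub>2(2) inverse_comp_cancel by simp
  finally have "m \<alpha>\<^sub>2 * n (\<alpha>\<^sub>1\<^sup>-\<^sup>1) = 0" ..
  moreover have "n (\<alpha>\<^sub>1\<^sup>-\<^sup>1) \<noteq> 0"
    using p\<^sub>1.m_mult_n_inverse_eq_one assms(1) \<alpha>\<^sub>1(2) by auto
  ultimately show False
    using \<alpha>\<^sub>2(1) by (simp add: supp_def)
qed

lemma m_mult_n_inverse_on_supp:
  assumes \<alpha>: "\<alpha> \<in> supp m"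
  shows "m \<alpha> * n (\<alpha>\<^sup>-\<^sup>1) = 1"
proof -
  have \<alpha>_arrow: "\<alpha> \<in> arrows G"
    using \<alpha> supp_steinberg_subset[OF m_steinberg] by blast
  define U where "U = {\<gamma> \<in> arrows G. m \<gamma> = m \<alpha>}
    \<inter> {\<gamma> \<in> topspace (gtop G). \<gamma>\<^sup>-\<^sup>1 \<in> {\<beta> \<in> arrows G. n \<beta> = n (\<alpha>\<^sup>-\<^sup>1)}} \<inter> supp m"
  have "openin (gtop G) {\<gamma> \<in> arrows G. m \<gamma> = m \<alpha>}"
    using openin_steinberg_preimage[OF m_steinberg, of "\<lambda>t. t = m \<alpha>"] by simp
  moreover have "openin (gtop G) {\<gamma> \<in> topspace (gtop G). \<gamma>\<^sup>-\<^sup>1 \<in> {\<beta> \<in> arrows G. n \<beta> = n (\<alpha>\<^sup>-\<^sup>1)}}"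
    using openin_steinberg_preimage[OF n_steinberg, of "\<lambda>t. t = n (\<alpha>\<^sup>-\<^sup>1)"]
    by (intro openin_continuous_map_preimage[OF continuous_map_inverse]) simp
  ultimately have "openin (gtop G) U"
    unfolding U_def using openin_supp_steinberg[OF m_steinberg] by blast
  then have src_U: "openin (unit_top G) (src ` U)"
    by (rule local_homeomorphism_openin_image[OF local_homeomorphism_src])
  have "\<alpha> \<in> U"
    using \<alpha> \<alpha>_arrow inverse_in_arrows[OF \<alpha>_arrow] by (simp add: U_def arrows_def)
  then have "src ` U \<noteq> {}"
    by blast
  then obtain x where "x \<in> src ` U" "trivial_units_at x"
    by (rule dense_trivial_units[OF src_U])
  then obtain \<gamma> where \<gamma>: "\<gamma> \<in> U" "trivial_units_at (src \<gamma>)"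
    by blast
  interpret isotropy_point \<Gamma> G c g m n \<gamma>
    using isotropy_pointI \<gamma>(1) by (simp add: U_def)
  show ?thesis
    using m_mult_n_inverse_eq_one[OF \<gamma>(2)] \<gamma>(1) by (simp add: U_def)
qed

lemma inj_on_src_supp_m: "inj_on src (supp m)"
proof (rule inj_onI, rule ccontr)
  fix \<alpha>\<^sub>1 \<alpha>\<^sub>2 assume \<alpha>: "\<alpha>\<^sub>1 \<in> supp m" "\<alpha>\<^sub>2 \<in> supp m" "src \<alpha>\<^sub>1 = src \<alpha>\<^sub>2" "\<alpha>\<^sub>1 \<noteq> \<alpha>\<^sub>2"
  then have "\<alpha>\<^sub>1 \<in> topspace (gtop G)" "\<alpha>\<^sub>2 \<in> topspace (gtop G)"
    using supp_steinberg_subset[OF m_steinberg] by (auto simp: arrows_def)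
  then obtain U\<^sub>1 U\<^sub>2 where U: "openin (gtop G) U\<^sub>1" "openin (gtop G) U\<^sub>2" "\<alpha>\<^sub>1 \<in> U\<^sub>1" "\<alpha>\<^sub>2 \<in> U\<^sub>2"
      "disjnt U\<^sub>1 U\<^sub>2"
    using Hausdorff \<alpha>(4) unfolding Hausdorff_space_def by blast
  let ?O = "src ` (U\<^sub>1 \<inter> supp m) \<inter> src ` (U\<^sub>2 \<inter> supp m)"
  have O: "openin (unit_top G) ?O"
    using U(1,2) openin_supp_steinberg[OF m_steinberg]
    by (intro openin_Int local_homeomorphism_openin_image[OF local_homeomorphism_src]) auto
  have "src \<alpha>\<^sub>1 \<in> ?O"
    using \<alpha> U(3,4) by (metis IntI image_eqI)
  then have "?O \<noteq> {}"
    by blast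
  then obtain x where x: "x \<in> ?O" "trivial_units_at x"
    by (rule dense_trivial_units[OF O])
  have "x \<in> src ` (U\<^sub>1 \<inter> supp m)"
    using x(1) by blast
  then obtain \<gamma>\<^sub>1 where \<gamma>\<^sub>1: "x = src \<gamma>\<^sub>1" "\<gamma>\<^sub>1 \<in> U\<^sub>1 \<inter> supp m"
    by (rule imageE)
  have "x \<in> src ` (U\<^sub>2 \<inter> supp m)"
    using x(1) by blast
  then obtain \<gamma>\<^sub>2 where \<gamma>\<^sub>2: "x = src \<gamma>\<^sub>2" "\<gamma>\<^sub>2 \<in> U\<^sub>2 \<inter> supp m"
    by (rule imageE)
  have "\<gamma>\<^sub>1 = \<gamma>\<^sub>2"
    using supp_m_src_fibre_unique[OF x(2), of \<gamma>\<^sub>1 \<gamma>\<^sub>2] \<gamma>\<^sub>1 \<gamma>\<^sub>2 by simp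
  then show False
    using \<gamma>\<^sub>1(2) \<gamma>\<^sub>2(2) U(5) by (auto simp: disjnt_def)
qed

lemma supp_n_eq_inverse_image: "supp n = ginv G ` supp m"
proof -
  interpret swap: graded_normaliser \<Gamma> G c "inv\<^bsub>\<Gamma>\<^esub> g" n m
    by (rule graded_normaliser_swap)
  show ?thesis
  proof
    show "ginv G ` supp m \<subseteq> supp n"
      using m_mult_n_inverse_on_supp by (force simp: supp_def)
    show "supp n \<subseteq> ginv G ` supp m"
    proof
      fix \<beta> assume \<beta>: "\<beta> \<in> supp n"
      then have "\<beta>\<^sup>-\<^sup>1 \<in> supp m"
        using swap.m_mult_n_inverse_on_supp by (force simp: supp_def)
      moreover have "\<beta> = (\<beta>\<^sup>-\<^sup>1)\<^sup>-\<^sup>1"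
        using \<beta> supp_steinberg_subset[OF n_steinberg] by auto
      ultimately show "\<beta> \<in> ginv G ` supp m"
        by blast
    qed
  qed
qed

lemma inj_on_rng_supp_m: "inj_on rng (supp m)"
proof (rule inj_onI)
  interpret swap: graded_normaliser \<Gamma> G c "inv\<^bsub>\<Gamma>\<^esub> g" n m
    by (rule graded_normaliser_swap)
  fix \<alpha>\<^sub>1 \<alpha>\<^sub>2 assume \<alpha>: "\<alpha>\<^sub>1 \<in> supp m" "\<alpha>\<^sub>2 \<in> supp m" "rng \<alpha>\<^sub>1 = rng \<alpha>\<^sub>2"
  then have "\<alpha>\<^sub>1 \<in> arrows G" "\<alpha>\<^sub>2 \<in> arrows G"
    using supp_steinberg_subset[OF m_steinberg] by blast+
  moreover from this have "\<alpha>\<^sub>1\<^sup>-\<^sup>1 = \<alpha>\<^sub>2\<^sup>-\<^sup>1"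
    using \<alpha> swap.inj_on_src_supp_m supp_n_eq_inverse_image by (simp add: inj_on_def)
  ultimately show "\<alpha>\<^sub>1 = \<alpha>\<^sub>2"
    by (metis inverse_inverse)
qed

lemma bisection_supp_m: "bisection G (supp m)"
  by (rule bisectionI[OF openin_supp_steinberg[OF m_steinberg] inj_on_rng_supp_m inj_on_src_supp_m])

lemma src_supp_n: "src ` supp n = rng ` supp m"
  unfolding supp_n_eq_inverse_image image_image
  using supp_steinberg_subset[OF m_steinberg] by (intro image_cong) auto

lemma conv_m_n_at_rng_supp:
  assumes \<alpha>\<^sub>0: "\<alpha>\<^sub>0 \<in> supp m"
  shows "conv G m n (rng \<alpha>\<^sub>0) = 1"
proof -
  have \<alpha>\<^sub>0_arrow: "\<alpha>\<^sub>0 \<in> arrows G"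
    using \<alpha>\<^sub>0 supp_steinberg_subset[OF m_steinberg] by blast
  have "{\<alpha> \<in> supp m. rng \<alpha> = rng \<alpha>\<^sub>0} = {\<alpha>\<^sub>0}"
    using \<alpha>\<^sub>0 inj_on_rng_supp_m by (auto simp: inj_on_def)
  then have "conv G m n (rng \<alpha>\<^sub>0) = m \<alpha>\<^sub>0 * n (\<alpha>\<^sub>0\<^sup>-\<^sup>1 \<cdot> rng \<alpha>\<^sub>0)"
    using \<alpha>\<^sub>0_arrow by (subst conv_eq_sum_rng_fibre[OF _ finite.insertI[OF finite.emptyI]]) auto
  also have "\<dots> = m \<alpha>\<^sub>0 * n (\<alpha>\<^sub>0\<^sup>-\<^sup>1)"
    using \<alpha>\<^sub>0_arrow comp_src_id[of "\<alpha>\<^sub>0\<^sup>-\<^sup>1"] by simp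
  also have "\<dots> = 1"
    by (rule m_mult_n_inverse_on_supp[OF \<alpha>\<^sub>0])
  finally show ?thesis .
qed

lemma conv_m_n_outside_rng_supp:
  assumes \<eta>: "\<eta> \<notin> rng ` supp m"
  shows "conv G m n \<eta> = 0"
proof (cases "\<eta> \<in> arrows G")
  case False
  then show ?thesis
    by (rule conv_outside_arrows)
next
  case True
  have "m \<alpha> * n (\<alpha>\<^sup>-\<^sup>1 \<cdot> \<eta>) = 0" if \<alpha>: "\<alpha> \<in> supp m" "rng \<alpha> = rng \<eta>" for \<alpha>
  proof (rule ccontr)
    assume "m \<alpha> * n (\<alpha>\<^sup>-\<^sup>1 \<cdot> \<eta>) \<noteq> 0"
    then have "\<alpha>\<^sup>-\<^sup>1 \<cdot> \<eta> \<in> ginv G ` supp m"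
      unfolding supp_n_eq_inverse_image[symmetric] by (simp add: supp_def)
    then obtain \<gamma> where \<gamma>: "\<alpha>\<^sup>-\<^sup>1 \<cdot> \<eta> = \<gamma>\<^sup>-\<^sup>1" "\<gamma> \<in> supp m"
      by (rule imageE)
    have arrows: "\<alpha> \<in> arrows G" "\<gamma> \<in> arrows G"
      using \<alpha>(1) \<gamma>(2) supp_steinberg_subset[OF m_steinberg] by blast+
    then have "src \<alpha> = src \<gamma>"
      using \<alpha> True \<gamma>(1) rng_comp[of "\<alpha>\<^sup>-\<^sup>1" \<eta>] by simp
    then have "\<alpha> = \<gamma>"
      using \<alpha>(1) \<gamma>(2) inj_on_src_supp_m by (simp add: inj_on_def)
    then have "\<eta> = rng \<alpha>"
      using \<alpha> arrows True \<gamma>(1) comp_inverse_cancel[of \<alpha> \<eta>] by simp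
    then show False
      using \<eta> \<alpha>(1) by blast
  qed
  moreover have "conv G m n \<eta> = (\<Sum>\<alpha>\<in>{\<alpha> \<in> supp m. rng \<alpha> = rng \<eta>}. m \<alpha> * n (\<alpha>\<^sup>-\<^sup>1 \<cdot> \<eta>))"
    using supp_steinberg_subset[OF m_steinberg]
    by (intro conv_eq_sum_rng_fibre[OF True finite_rng_fibre_supp[OF m_steinberg]]) auto
  ultimately show ?thesis
    by (simp add: sum.neutral)
qed

lemma conv_m_n: "conv G m n = indicator (src ` supp n)"
proof
  fix \<eta>
  show "conv G m n \<eta> = indicator (src ` supp n) \<eta>"
    unfolding src_supp_n
    using conv_m_n_at_rng_supp conv_m_n_outside_rng_supp by (cases "\<eta> \<in> rng ` supp m") auto
qed

end

theorem mainTheorem3: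
  fixes G :: "'g top_groupoid"
    and \<Gamma> :: "('c, 'm) monoid_scheme"
    and c :: "'g \<Rightarrow> 'c"
    and g :: 'c
    and m n :: "'g \<Rightarrow> 'a::idom"
  assumes "group \<Gamma>"
    and "class_C TYPE('a) \<Gamma> G c"
    and "g \<in> carrier \<Gamma>"
    and "(m, n) \<in> graded_normalisers G \<Gamma> c g"
  shows "(conv G m n = indicator (gsrc G ` supp n)
       \<and> conv G n m = indicator (gsrc G ` supp m))
     \<and> (compactin (gtop G) (supp m) \<and> openin (gtop G) (supp m) \<and> bisection G (supp m)
       \<and> supp m \<subseteq> {\<eta> \<in> arrows G. c \<eta> = g})
     \<and> supp n = ginv G ` supp m"
proof -
  interpret graded_normaliser \<Gamma> G c g m n
    by (rule graded_normaliser.intro[OF assms])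
  interpret swap: graded_normaliser \<Gamma> G c "inv\<^bsub>\<Gamma>\<^esub> g" n m
    by (rule graded_normaliser_swap)
  show ?thesis
    by (intro conjI conv_m_n swap.conv_m_n compactin_supp_steinberg openin_supp_steinberg
        m_steinberg bisection_supp_m supp_m_graded supp_n_eq_inverse_image)
qed

end
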